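(* Let $(y_1,x_1),\dots,(y_\ell,x_\ell)\in\mathbb{R}^3\times\mathbb{R}^3$ and $c_1^2,\dots,c_\ell^2\ge 0$. Then strong duality holds between (SDR) and (D), i.e., the optimal values of (SDR) and (D) are equal.
   Context: For $w\in\mathbb{S}^3$ (unit sphere of $\mathbb{R}^4$), $R(w)\in SO(3)$ denotes the rotation matrix associated to the unit quaternion $w=[w_1;w_2;w_3;w_4]$ by the standard formula $R(w)=\begin{bmatrix} w_1^2+w_2^2-w_3^2-w_4^2 & 2(w_2w_3-w_1w_4) & 2(w_2w_4+w_1w_3)\\ 2(w_2w_3+w_1w_4) & w_1^2+w_3^2-w_2^2-w_4^2 & 2(w_3w_4-w_1w_2)\\ 2(w_2w_4-w_1w_3) & 2(w_3w_4+w_1w_2) & w_1^2+w_4^2-w_2^2-w_3^2\end{bmatrix}$. For each $i$, $Q_i$ is the unique symmetric $4\times4$ matrix with $w^\top Q_i w=\|y_i-R(w)x_i\|_2^2$ for all $w\in\mathbb{S}^3$. For a matrix $\mathcal{A}\in\mathbb{R}^{4(\ell+1)\times 4(\ell+1)}$ and $i,j\in\{0,\dots,\ell\}$, $[\mathcal{A}]_{ij}$ is the $4\times 4$ block with rows $4i+1,\dots,4i+4$ and columns $4j+1,\dots,4j+4$. $\mathcal{Q}$ is the symmetric $4(\ell+1)\times4(\ell+1)$ matrix with $[\mathcal{Q}]_{0i}=[\mathcal{Q}]_{i0}=\tfrac12(Q_i-c_i^2I_4)$ for $i=1,\dots,\ell$ and all other blocks zero. (SDR) is the problem: minimize $\operatorname{tr}(\mathcal{Q}\mathcal{W})+\sum_{i=1}^\ell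 c_i^2$ over symmetric positive semidefinite $\mathcal{W}\in\mathbb{R}^{4(\ell+1)\times4(\ell+1)}$ subject to $[\mathcal{W}]_{0i}=[\mathcal{W}]_{ii}$ for $i=1,\dots,\ell$ and $\operatorname{tr}([\mathcal{W}]_{00})=1$. $\mathcal{B}$ is the $4(\ell+1)\times4(\ell+1)$ matrix that is zero except $[\mathcal{B}]_{00}=I_4$. An admissible dual matrix is a symmetric $\mathcal{D}\in\mathbb{R}^{4(\ell+1)\times4(\ell+1)}$ with $[\mathcal{D}]_{ii}+2[\mathcal{D}]_{0i}=0$ for $i=1,\dots,\ell$ and all blocks other than $[\mathcal{D}]_{ii},[\mathcal{D}]_{0i},[\mathcal{D}]_{i0}$ ($i\ge1$) equal to zero. (D) is the problem: maximize $\mu+\sum_{i=1}^\ell c_i^2$ over $\mu\in\mathbb{R}$ and admissible dual matrices $\mathcal{D}$ subject to $\mathcal{Q}-\mu\mathcal{B}-\mathcal{D}\succeq 0$. *)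

theory Defs
  imports "HOL-Analysis.Analysis"
begin

(* Rotation matrix R(w) of a unit quaternion w = [w1;w2;w3;w4]; components w$1,...,w$4
   (in the index type 4, the numeral 4 is a valid fourth, distinct index). *)
definition rotq :: "real^4 \<Rightarrow> real^3^3" where
  "rotq w = (let w1 = w$1; w2 = w$2; w3 = w$3; w4 = w$4 in
     vector [
       vector [w1^2+w2^2-w3^2-w4^2, 2*(w2*w3-w1*w4), 2*(w2*w4+w1*w3)],
       vector [2*(w2*w3+w1*w4), w1^2+w3^2-w2^2-w4^2, 2*(w3*w4-w1*w2)],
       vector [2*(w2*w4-w1*w3), 2*(w3*w4+w1*w2), w1^2+w4^2-w2^2-w3^2]])"

definition Qmat :: "real^3 \<Rightarrow> real^3 \<Rightarrow> real^4^4" where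
  "Qmat y x = (THE Q. transpose Q = Q \<and>
      (\<forall>w::real^4. norm w = 1 \<longrightarrow> w \<bullet> (Q *v w) = (norm (y - rotq w *v x))^2))"

definition idx4 :: "nat \<Rightarrow> 4" where
  "idx4 p = of_nat (Suc p)"

(* Big matrices of size 4(l+1) are represented as nat \<Rightarrow> nat \<Rightarrow> real, only entries
   with indices < 4(l+1) being relevant.  Entry (4i+p, 4j+q), p,q<4, is entry (p,q)
   of block [A]_{ij}. *)
definition dimS :: "nat \<Rightarrow> nat" where
  "dimS l = 4 * (l + 1)"

definition psd :: "nat \<Rightarrow> (nat \<Rightarrow> nat \<Rightarrow> real) \<Rightarrow> bool" where
  "psd n A \<longleftrightarrow> (\<forall>a<n. \<forall>b<n. A a b = A b a) \<and>
     (\<forall>v::nat \<Rightarrow> real. 0 \<le> (\<Sum>a<n. \<Sum>b<n. v a * A a b * v b))"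

definition mtrace :: "nat \<Rightarrow> (nat \<Rightarrow> nat \<Rightarrow> real) \<Rightarrow> real" where
  "mtrace n A = (\<Sum>a<n. A a a)"

definition mmult :: "nat \<Rightarrow> (nat \<Rightarrow> nat \<Rightarrow> real) \<Rightarrow> (nat \<Rightarrow> nat \<Rightarrow> real) \<Rightarrow> nat \<Rightarrow> nat \<Rightarrow> real" where
  "mmult n A B = (\<lambda>a b. \<Sum>k<n. A a k * B k b)"

definition bigQ :: "nat \<Rightarrow> (nat \<Rightarrow> real^3) \<Rightarrow> (nat \<Rightarrow> real^3) \<Rightarrow> (nat \<Rightarrow> real)
    \<Rightarrow> nat \<Rightarrow> nat \<Rightarrow> real" where
  "bigQ l y x c = (\<lambda>a b.
     let i = a div 4; j = b div 4; p = a mod 4; q = b mod 4;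
         blk = (\<lambda>k. (Qmat (y k) (x k) $ idx4 p $ idx4 q - (c k)^2 * (if p = q then 1 else 0)) / 2)
     in if i = 0 \<and> 1 \<le> j \<and> j \<le> l then blk j
        else if j = 0 \<and> 1 \<le> i \<and> i \<le> l then blk i
        else 0)"

definition bigB :: "nat \<Rightarrow> nat \<Rightarrow> real" where
  "bigB = (\<lambda>a b. if a < 4 \<and> a = b then 1 else 0)"

definition SDR_feasible :: "nat \<Rightarrow> (nat \<Rightarrow> nat \<Rightarrow> real) \<Rightarrow> bool" where
  "SDR_feasible l W \<longleftrightarrow> psd (dimS l) W \<and>
     (\<forall>i\<in>{1..l}. \<forall>p<4. \<forall>q<4. W p (4*i+q) = W (4*i+p) (4*i+q)) \<and>
     (\<Sum>p<4. W p p) = 1"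

definition SDR_obj :: "nat \<Rightarrow> (nat \<Rightarrow> real^3) \<Rightarrow> (nat \<Rightarrow> real^3) \<Rightarrow> (nat \<Rightarrow> real)
    \<Rightarrow> (nat \<Rightarrow> nat \<Rightarrow> real) \<Rightarrow> real" where
  "SDR_obj l y x c W = mtrace (dimS l) (mmult (dimS l) (bigQ l y x c) W) + (\<Sum>i=1..l. (c i)^2)"

definition SDR_val :: "nat \<Rightarrow> (nat \<Rightarrow> real^3) \<Rightarrow> (nat \<Rightarrow> real^3) \<Rightarrow> (nat \<Rightarrow> real) \<Rightarrow> ereal" where
  "SDR_val l y x c = Inf {ereal (SDR_obj l y x c W) | W. SDR_feasible l W}"

definition admissible_dual :: "nat \<Rightarrow> (nat \<Rightarrow> nat \<Rightarrow> real) \<Rightarrow> bool" where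
  "admissible_dual l D \<longleftrightarrow>
     (\<forall>a<dimS l. \<forall>b<dimS l. D a b = D b a) \<and>
     (\<forall>i\<in>{1..l}. \<forall>p<4. \<forall>q<4. D (4*i+p) (4*i+q) + 2 * D p (4*i+q) = 0) \<and>
     (\<forall>a<dimS l. \<forall>b<dimS l.
        \<not> ((a div 4 = b div 4 \<and> 1 \<le> a div 4) \<or> (a div 4 = 0 \<and> 1 \<le> b div 4)
            \<or> (b div 4 = 0 \<and> 1 \<le> a div 4)) \<longrightarrow> D a b = 0)"

definition D_feasible :: "nat \<Rightarrow> (nat \<Rightarrow> real^3) \<Rightarrow> (nat \<Rightarrow> real^3) \<Rightarrow> (nat \<Rightarrow> real)
    \<Rightarrow> real \<Rightarrow> (nat \<Rightarrow> nat \<Rightarrow> real) \<Rightarrow> bool" where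
  "D_feasible l y x c \<mu> D \<longleftrightarrow> admissible_dual l D \<and>
     psd (dimS l) (\<lambda>a b. bigQ l y x c a b - \<mu> * bigB a b - D a b)"

definition D_val :: "nat \<Rightarrow> (nat \<Rightarrow> real^3) \<Rightarrow> (nat \<Rightarrow> real^3) \<Rightarrow> (nat \<Rightarrow> real) \<Rightarrow> ereal" where
  "D_val l y x c = Sup {ereal (\<mu> + (\<Sum>i=1..l. (c i)^2)) | \<mu> D. D_feasible l y x c \<mu> D}"

end

(*
  Write P_i = Q_i - c_i^2 I.  For W feasible in (SDR) the objective is the sum of the Frobenius
  products P_i . W_ii, and the constraints force 0 <= W_ii <= W_00 in the Loewner order, with
  tr W_00 = 1.  Conversely, if W_00 is positive definite, any such family W_ii is completed to a
  feasible W with the help of W_00^-1.  Dually, symmetric Gamma_i with Gamma_i >= 0,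
  Gamma_i >= -P_i and sum_i Gamma_i <= -mu I give a feasible point (mu, D) of (D).

  Weak duality is tr((Q - mu B - D) W) >= 0.  For the converse, a separating hyperplane in the
  space of 4x4 matrices yields either such Gamma_i with sum_i Gamma_i <= t I, or a density matrix
  W_00 with W_00 . sum_i Gamma_i >= t for all such Gamma_i.  In the second case a blockwise
  duality, min {P . X | 0 <= X <= W} = sup {-W . Gamma | Gamma >= 0, Gamma >= -P} for positive
  definite W (a second separation argument), applied to a slight perturbation of W_00 produces a
  feasible point of (SDR) of value close to -t + sum_i c_i^2.
*)

theory Submission
  imports Defs
begin

subsection \<open>Quadratic forms and symmetric matrices\<close>

lemma inner_matrix_eq: "(A::real^'n^'m) \<bullet> B = (\<Sum>i\<in>UNIV. \<Sum>j\<in>UNIV. A$i$j * B$i$j)"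
  by (simp add: inner_vec_def)

lemma quadratic_form_eq: "v \<bullet> ((A::real^'n^'m) *v w) = (\<Sum>i\<in>UNIV. \<Sum>j\<in>UNIV. v$i * A$i$j * w$j)"
  by (simp add: inner_vec_def matrix_vector_mult_def sum_distrib_left mult.assoc)

lemma quadratic_form_axis: "axis i 1 \<bullet> ((A::real^'n^'m) *v axis j 1) = A$i$j"
  by (simp add: inner_axis' matrix_vector_mult_basis column_def)

lemma transpose_add: "transpose (A + B) = transpose A + transpose (B::'a::semiring_1^'n^'m)"
  by (simp add: transpose_def vec_eq_iff)

lemma transpose_diff: "transpose (A - B) = transpose A - transpose (B::'a::ring_1^'n^'m)"
  by (simp add: transpose_def vec_eq_iff)

lemma transpose_uminus: "transpose (- A) = - transpose (A::'a::ring_1^'n^'m)"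
  by (simp add: transpose_def vec_eq_iff)

lemma transpose_zero [simp]: "transpose 0 = (0::'a::zero^'n^'m)"
  by (simp add: transpose_def vec_eq_iff)

lemma transpose_sum: "transpose (\<Sum>i\<in>I. f i) = (\<Sum>i\<in>I. transpose (f i::'a::semiring_1^'n^'m))"
  by (induction I rule: infinite_finite_induct)
    (simp_all add: transpose_add transpose_def vec_eq_iff)

lemma symmetric_entry: "transpose A = A \<Longrightarrow> A$j$i = A$i$j"
  by (metis transpose_def vec_lambda_beta)

lemma inner_transpose_transpose: "transpose A \<bullet> B = (A::real^'n^'n) \<bullet> transpose B"
  unfolding inner_matrix_eq transpose_def by simp (rule sum.swap)

lemma inner_mv_transpose: "((A::real^'n^'m) *v u) \<bullet> w = u \<bullet> (transpose A *v w)"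
proof -
  have "(A *v u) \<bullet> w = w \<bullet> (A *v u)"
    by (rule inner_commute)
  also have "\<dots> = (w v* A) \<bullet> u"
    by (rule dot_lmul_matrix[symmetric])
  finally show ?thesis
    by (simp add: inner_commute)
qed

lemma inner_mv_symmetric: "transpose A = A \<Longrightarrow> u \<bullet> ((A::real^'n^'n) *v w) = w \<bullet> (A *v u)"
  using inner_mv_transpose[of A w u] by (simp add: inner_commute)

lemma matrix_vector_mult_uminus: "(- A) *v x = - (A *v (x::real^'n))"
  by (simp add: matrix_vector_mult_def vec_eq_iff sum_negf)

lemma matrix_vector_mult_sum_left: "(\<Sum>i\<in>I. A i) *v x = (\<Sum>i\<in>I. A i *v (x::real^'n))"
  by (induction I rule: infinite_finite_induct) (simp_all add: matrix_vector_mult_add_rdistrib)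

lemma inner_mat1: "A \<bullet> mat 1 = trace (A::real^'n^'n)"
proof -
  have rows: "(mat 1 :: real^'n^'n) $ i = axis i 1" for i
    by (simp add: mat_def axis_def vec_eq_iff)
  have "A \<bullet> mat 1 = (\<Sum>i\<in>UNIV. A$i \<bullet> (mat 1 :: real^'n^'n)$i)"
    by (simp only: inner_vec_def)
  then show ?thesis
    by (simp add: rows trace_def inner_axis)
qed

lemma trace_scaleR: "trace (c *\<^sub>R A) = c * trace (A::real^'n^'n)"
  by (simp add: trace_def sum_distrib_left)

lemma trace_uminus: "trace (- A) = - trace (A::'a::comm_ring_1^'n^'n)"
  by (simp add: trace_def sum_negf)

lemma symmetric_matrix_eqI_sphere:
  fixes A B :: "real^'n^'n"
  assumes "transpose A = A" "transpose B = B"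
    and form: "\<And>w. norm w = 1 \<Longrightarrow> w \<bullet> (A *v w) = w \<bullet> (B *v w)"
  shows "A = B"
proof -
  define D where "D = A - B"
  have D_sym: "D$j$i = D$i$j" for i j
    using assms(1,2) by (simp add: D_def transpose_diff symmetric_entry)
  have D_form: "w \<bullet> (D *v w) = 0" for w
  proof (cases "w = 0")
    case False
    have "(w /\<^sub>R norm w) \<bullet> (D *v (w /\<^sub>R norm w)) = 0"
      using form[of "w /\<^sub>R norm w"] False
      by (simp add: D_def matrix_vector_mult_diff_rdistrib inner_diff_right)
    then show ?thesis
      using False by (simp add: matrix_vector_mult_scaleR)
  qed simp
  have "D$i$j = 0" for i j
  proof -
    have "0 = (axis i 1 + axis j 1) \<bullet> (D *v (axis i 1 + axis j 1))"
      by (rule D_form[symmetric])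
    also have "\<dots> = D$i$i + D$i$j + D$j$i + D$j$j"
      by (simp add: matrix_vector_right_distrib inner_add_left inner_add_right quadratic_form_axis)
    finally show ?thesis
      using D_form[of "axis i 1"] D_form[of "axis j 1"] D_sym[of i j]
      by (simp add: quadratic_form_axis)
  qed
  then show ?thesis by (simp add: D_def vec_eq_iff)
qed

subsection \<open>The cost matrices of the registration problem\<close>

text \<open>For a unit quaternion \<open>w\<close> one has \<open>y \<bullet> (R(w) x) = w \<bullet> (N w)\<close> with \<open>N\<close> the
  matrix in the second summand, whence \<open>\<parallel>y - R(w) x\<parallel>\<^sup>2 = \<parallel>y\<parallel>\<^sup>2 + \<parallel>x\<parallel>\<^sup>2 - 2 w \<bullet> (N w)\<close>.\<close>

definition rot_cost_matrix :: "real^3 \<Rightarrow> real^3 \<Rightarrow> real^4^4" where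
  "rot_cost_matrix y x = (norm y ^ 2 + norm x ^ 2) *\<^sub>R mat 1 - 2 *\<^sub>R
     (let y1 = y$1; y2 = y$2; y3 = y$3; x1 = x$1; x2 = x$2; x3 = x$3 in
      vector [
       vector [y1*x1+y2*x2+y3*x3, y3*x2-y2*x3, y1*x3-y3*x1, y2*x1-y1*x2],
       vector [y3*x2-y2*x3, y1*x1-y2*x2-y3*x3, y1*x2+y2*x1, y1*x3+y3*x1],
       vector [y1*x3-y3*x1, y1*x2+y2*x1, -y1*x1+y2*x2-y3*x3, y2*x3+y3*x2],
       vector [y2*x1-y1*x2, y1*x3+y3*x1, y2*x3+y3*x2, -y1*x1-y2*x2+y3*x3]])"

lemma vector_4 [simp]:
  "(vector [a, b, c, d] :: 'a::zero^4) $ 1 = a"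
  "(vector [a, b, c, d] :: 'a::zero^4) $ 2 = b"
  "(vector [a, b, c, d] :: 'a::zero^4) $ 3 = c"
  "(vector [a, b, c, d] :: 'a::zero^4) $ 4 = d"
  by (simp_all add: vector_def)

lemma rot_cost_matrix_symmetric: "transpose (rot_cost_matrix y x) = rot_cost_matrix y x"
  unfolding rot_cost_matrix_def Let_def
  by (simp add: vec_eq_iff transpose_def forall_4 mat_def)

lemma rot_cost_matrix_form:
  assumes "norm w = 1"
  shows "w \<bullet> (rot_cost_matrix y x *v w) = (norm (y - rotq w *v x))\<^sup>2"
proof -
  have unit: "w$1^2 + w$2^2 + w$3^2 + w$4^2 = 1"
    using assms by (simp add: norm_eq_1 inner_vec_def sum_4 power2_eq_square)
  show ?thesis
    unfolding rot_cost_matrix_def rotq_def Let_def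
    apply (simp add: power2_norm_eq_inner inner_vec_def sum_4 sum_3 matrix_vector_mult_def mat_def)
    using unit by algebra
qed

lemma Qmat_eq: "Qmat y x = rot_cost_matrix y x"
  unfolding Qmat_def
proof (rule the_equality)
  show "transpose (rot_cost_matrix y x) = rot_cost_matrix y x \<and>
      (\<forall>w. norm w = 1 \<longrightarrow> w \<bullet> (rot_cost_matrix y x *v w) = (norm (y - rotq w *v x))\<^sup>2)"
    using rot_cost_matrix_symmetric rot_cost_matrix_form by blast
next
  fix Q :: "real^4^4"
  assume Q: "transpose Q = Q \<and> (\<forall>w. norm w = 1 \<longrightarrow> w \<bullet> (Q *v w) = (norm (y - rotq w *v x))\<^sup>2)"
  show "Q = rot_cost_matrix y x"
  proof (rule symmetric_matrix_eqI_sphere)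
    fix w :: "real^4"
    assume "norm w = 1"
    then show "w \<bullet> (Q *v w) = w \<bullet> (rot_cost_matrix y x *v w)"
      using Q by (simp add: rot_cost_matrix_form)
  qed (use Q rot_cost_matrix_symmetric in auto)
qed

lemma Qmat_symmetric: "transpose (Qmat y x) = Qmat y x"
  by (simp add: Qmat_eq rot_cost_matrix_symmetric)

definition cost_shift :: "(nat \<Rightarrow> real^3) \<Rightarrow> (nat \<Rightarrow> real^3) \<Rightarrow> (nat \<Rightarrow> real) \<Rightarrow> nat \<Rightarrow> real^4^4" where
  "cost_shift y x c i = Qmat (y i) (x i) - (c i)\<^sup>2 *\<^sub>R mat 1"

lemma cost_shift_symmetric: "transpose (cost_shift y x c i) = cost_shift y x c i"
  by (simp add: cost_shift_def transpose_diff transpose_scalar Qmat_symmetric)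

subsection \<open>Positive semidefinite matrices\<close>

definition psd_matrix :: "real^'n^'n \<Rightarrow> bool" where
  "psd_matrix A \<longleftrightarrow> transpose A = A \<and> (\<forall>v. 0 \<le> v \<bullet> (A *v v))"

lemma psd_matrix_symmetric: "psd_matrix A \<Longrightarrow> transpose A = A"
  by (simp add: psd_matrix_def)

lemma psd_matrix_form: "psd_matrix A \<Longrightarrow> 0 \<le> v \<bullet> (A *v v)"
  by (simp add: psd_matrix_def)

lemma psd_matrix_0: "psd_matrix (0::real^'n^'n)"
  by (simp add: psd_matrix_def transpose_def vec_eq_iff)

lemma psd_matrix_mat1: "psd_matrix (mat 1 :: real^'n^'n)"
  by (simp add: psd_matrix_def)

lemma psd_matrix_add: "psd_matrix A \<Longrightarrow> psd_matrix B \<Longrightarrow> psd_matrix (A + B)"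
  by (simp add: psd_matrix_def transpose_add matrix_vector_mult_add_rdistrib inner_add_right)

lemma psd_matrix_scaleR: "psd_matrix A \<Longrightarrow> 0 \<le> c \<Longrightarrow> psd_matrix (c *\<^sub>R A)"
  by (simp add: psd_matrix_def transpose_scalar flip: scaleR_matrix_vector_assoc)

lemma psd_matrix_sum: "(\<And>i. i \<in> I \<Longrightarrow> psd_matrix (A i)) \<Longrightarrow> psd_matrix (\<Sum>i\<in>I. A i)"
  by (induction I rule: infinite_finite_induct) (auto intro: psd_matrix_add psd_matrix_0)

lemma psd_matrix_if_psd_diff_mat1: "psd_matrix (W - \<delta> *\<^sub>R mat 1) \<Longrightarrow> 0 \<le> \<delta> \<Longrightarrow> psd_matrix W"
  using psd_matrix_add[of "W - \<delta> *\<^sub>R mat 1" "\<delta> *\<^sub>R mat 1"] psd_matrix_scaleR[OF psd_matrix_mat1, of \<delta>]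
  by simp

lemma psd_matrix_diag_nonneg: "psd_matrix A \<Longrightarrow> 0 \<le> A$i$i"
  using psd_matrix_form[of A "axis i 1"] by (simp add: quadratic_form_axis)

lemma psd_matrix_entry_bound:
  assumes "psd_matrix A"
  shows "2 * \<bar>A$i$j\<bar> \<le> A$i$i + A$j$j"
proof -
  have form: "0 \<le> A$i$i + 2 * s * A$i$j + s * s * A$j$j" for s
  proof -
    have "0 \<le> (axis i 1 + s *\<^sub>R axis j 1) \<bullet> (A *v (axis i 1 + s *\<^sub>R axis j 1))"
      using assms by (rule psd_matrix_form)
    also have "\<dots> = A$i$i + 2 * s * A$i$j + s * s * A$j$j"
      using symmetric_entry[OF psd_matrix_symmetric[OF assms], of i j]
      by (simp add: matrix_vector_right_distrib matrix_vector_mult_scaleR inner_add_left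
          inner_add_right quadratic_form_axis algebra_simps)
    finally show ?thesis .
  qed
  show ?thesis
    using form[of 1] form[of "-1"] by (simp add: abs_if)
qed

lemma psd_matrix_diag_le_trace: "psd_matrix A \<Longrightarrow> A$i$i \<le> trace A"
  unfolding trace_def by (rule member_le_sum) (auto intro: psd_matrix_diag_nonneg)

lemma psd_matrix_entry_le_trace: "psd_matrix A \<Longrightarrow> \<bar>A$i$j\<bar> \<le> trace A"
  using psd_matrix_entry_bound[of A i j] psd_matrix_diag_le_trace[of A i]
    psd_matrix_diag_le_trace[of A j] by linarith

lemma trace_psd_nonneg: "psd_matrix A \<Longrightarrow> 0 \<le> trace A"
  by (simp add: trace_def sum_nonneg psd_matrix_diag_nonneg)

lemma psd_matrix_trace_eq_0: "psd_matrix A \<Longrightarrow> trace A = 0 \<Longrightarrow> A = 0"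
  using psd_matrix_entry_le_trace by (fastforce simp: vec_eq_iff)

lemma psd_matrixI_dual:
  fixes M :: "real^'n^'n"
  assumes "transpose M = M" and dual: "\<And>X. psd_matrix X \<Longrightarrow> 0 \<le> M \<bullet> X"
  shows "psd_matrix M"
  unfolding psd_matrix_def
proof (intro conjI allI)
  fix v :: "real^'n"
  define X :: "real^'n^'n" where "X = (\<chi> i j. v$i * v$j)"
  have "psd_matrix X"
  proof -
    have "w \<bullet> (X *v w) = (v \<bullet> w)\<^sup>2" for w
    proof -
      have "w \<bullet> (X *v w) = (\<Sum>i\<in>UNIV. v$i * w$i) * (\<Sum>j\<in>UNIV. v$j * w$j)"
        by (simp add: X_def quadratic_form_eq sum_product mult_ac)
      then show ?thesis
        by (simp add: inner_vec_def power2_eq_square)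
    qed
    then show ?thesis
      by (simp add: psd_matrix_def X_def transpose_def vec_eq_iff mult.commute)
  qed
  moreover have "M \<bullet> X = v \<bullet> (M *v v)"
    by (simp add: X_def inner_matrix_eq quadratic_form_eq mult_ac)
  ultimately show "0 \<le> v \<bullet> (M *v v)"
    using dual by metis
qed (rule assms(1))

lemma psd_matrix_add_onorm:
  fixes P :: "real^'n^'n"
  assumes "transpose P = P"
  shows "psd_matrix (P + onorm ((*v) P) *\<^sub>R mat 1)"
  unfolding psd_matrix_def
proof (intro conjI allI)
  fix v :: "real^'n"
  have "\<bar>v \<bullet> (P *v v)\<bar> \<le> norm v * norm (P *v v)"
    by (rule Cauchy_Schwarz_ineq2)
  also have "\<dots> \<le> norm v * (onorm ((*v) P) * norm v)"
    by (intro mult_left_mono onorm) simp_all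
  also have "\<dots> = onorm ((*v) P) * (v \<bullet> v)"
    by (simp flip: power2_norm_eq_inner add: power2_eq_square)
  finally show "0 \<le> v \<bullet> ((P + onorm ((*v) P) *\<^sub>R mat 1) *v v)"
    by (simp add: matrix_vector_mult_add_rdistrib inner_add_right flip: scaleR_matrix_vector_assoc)
qed (simp add: assms transpose_add transpose_scalar)

lemma abs_inner_matrix_interval_le:
  fixes P X W :: "real^'n^'n"
  assumes "psd_matrix X" "psd_matrix (W - X)"
  shows "\<bar>P \<bullet> X\<bar> \<le> (\<Sum>i\<in>UNIV. \<Sum>j\<in>UNIV. \<bar>P$i$j\<bar>) * trace W"
proof -
  have "trace X \<le> trace W"
    using trace_psd_nonneg[OF assms(2)] by (simp add: trace_sub)
  then have entry: "\<bar>P$i$j * X$i$j\<bar> \<le> \<bar>P$i$j\<bar> * trace W" for i j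
    using psd_matrix_entry_le_trace[OF assms(1), of i j]
    by (simp add: abs_mult mult_left_mono)
  have "\<bar>P \<bullet> X\<bar> \<le> (\<Sum>i\<in>UNIV. \<Sum>j\<in>UNIV. \<bar>P$i$j * X$i$j\<bar>)"
    unfolding inner_matrix_eq by (rule order_trans[OF sum_abs sum_mono[OF sum_abs]])
  also have "\<dots> \<le> (\<Sum>i\<in>UNIV. \<Sum>j\<in>UNIV. \<bar>P$i$j\<bar> * trace W)"
    by (intro sum_mono entry)
  finally show ?thesis
    by (simp add: sum_distrib_right)
qed

lemma positive_definite_symmetric_inverse:
  fixes W :: "real^'n^'n"
  assumes W: "psd_matrix (W - \<delta> *\<^sub>R mat 1)" "0 < \<delta>"
  obtains V where "W ** V = mat 1" "transpose V = V"
proof -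
  have W_sym: "transpose W = W"
    using psd_matrix_symmetric[OF W(1)] by (simp add: transpose_diff transpose_scalar)
  have "inj ((*v) W)"
  proof (rule injI)
    fix u v
    assume "W *v u = W *v v"
    then have "W *v (u - v) = 0"
      by (simp add: matrix_vector_mult_diff_distrib)
    have "0 \<le> (u - v) \<bullet> ((W - \<delta> *\<^sub>R mat 1) *v (u - v))"
      by (rule psd_matrix_form[OF W(1)])
    also have "\<dots> = - \<delta> * ((u - v) \<bullet> (u - v))"
      using \<open>W *v (u - v) = 0\<close>
      by (simp add: matrix_vector_mult_diff_rdistrib flip: scaleR_matrix_vector_assoc)
    finally have "(u - v) \<bullet> (u - v) \<le> 0"
      using W(2) by (simp add: mult_le_0_iff)
    then show "u = v"
      using inner_ge_zero[of "u - v"] by simp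
  qed
  then obtain V where "V ** W = mat 1"
    using matrix_left_invertible_injective by blast
  then have WV: "W ** V = mat 1"
    using matrix_left_right_inverse by blast
  have "W ** transpose V = mat 1"
    using \<open>V ** W = mat 1\<close> W_sym by (metis matrix_transpose_mul transpose_mat)
  then have "transpose V = V"
    using \<open>V ** W = mat 1\<close> by (metis matrix_mul_assoc matrix_mul_lid matrix_mul_rid)
  with WV that show ?thesis
    by blast
qed

lemma psd_matrix_diff_mult_inverse:
  fixes X W V :: "real^'n^'n"
  assumes X: "psd_matrix X" "psd_matrix (W - X)" and V: "W ** V = mat 1" "transpose V = V"
  shows "psd_matrix (X - X ** V ** X)"
  unfolding psd_matrix_def
proof (intro conjI allI)
  have X_sym: "transpose X = X"
    using X(1) by (rule psd_matrix_symmetric)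
  then show "transpose (X - X ** V ** X) = X - X ** V ** X"
    by (simp add: transpose_diff matrix_transpose_mul V(2) matrix_mul_assoc)
  fix z :: "real^'n"
  define w where "w = V *v (X *v z)"
  have Ww: "W *v w = X *v z"
    by (simp add: w_def matrix_vector_mul_assoc matrix_mul_assoc V(1))
  have Xw: "z \<bullet> (X *v w) = w \<bullet> (X *v z)"
    by (rule inner_mv_symmetric[OF X_sym])
  have "0 \<le> w \<bullet> ((W - X) *v w) + (z - w) \<bullet> (X *v (z - w))"
    by (intro add_nonneg_nonneg psd_matrix_form X)
  also have "\<dots> = z \<bullet> (X *v z) - w \<bullet> (X *v z)"
    using Xw by (simp add: Ww algebra_simps inner_diff_left inner_diff_right)
  also have "w \<bullet> (X *v z) = z \<bullet> ((X ** V ** X) *v z)"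
    unfolding w_def inner_mv_transpose V(2)
    by (simp add: inner_commute inner_mv_transpose X_sym matrix_vector_mul_assoc matrix_mul_assoc)
  finally show "0 \<le> z \<bullet> ((X - X ** V ** X) *v z)"
    by (simp add: matrix_vector_mult_diff_rdistrib inner_diff_right)
qed

subsection \<open>Two separation arguments\<close>

lemma nonneg_if_bounded_below_on_ray:
  fixes a b c :: real
  assumes "\<And>s. 0 \<le> s \<Longrightarrow> b \<le> a + s * c"
  shows "0 \<le> c"
proof (rule ccontr)
  assume "\<not> 0 \<le> c"
  then have "c < 0" by simp
  define s where "s = (\<bar>a\<bar> + \<bar>b\<bar> + 1) / - c"
  have "0 \<le> s"
    unfolding s_def using \<open>c < 0\<close> by (intro divide_nonneg_pos) auto
  moreover have "s * c = - (\<bar>a\<bar> + \<bar>b\<bar> + 1)"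
    using \<open>c < 0\<close> by (simp add: s_def)
  ultimately show False
    using assms[of s] by linarith
qed

lemma zero_if_bounded_below_on_line:
  fixes a b c :: real
  assumes "\<And>s. b \<le> a + s * c"
  shows "c = 0"
  using nonneg_if_bounded_below_on_ray[of b a c] nonneg_if_bounded_below_on_ray[of b a "- c"]
    assms[of "- _"] assms by force

lemma symmetric_if_bounded_below_on_antisymmetric:
  fixes G :: "real^'n^'n"
  assumes bound: "\<And>A. transpose A = - A \<Longrightarrow> b \<le> a + G \<bullet> A"
  shows "transpose G = G"
proof -
  have orth: "G \<bullet> A = 0" if "transpose A = - A" for A
  proof (rule zero_if_bounded_below_on_line)
    fix s :: real
    show "b \<le> a + s * (G \<bullet> A)"
      using bound[of "s *\<^sub>R A"] that by (simp add: transpose_scalar)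
  qed
  define A where "A = G - transpose G"
  have antisym: "transpose A = - A"
    by (simp add: A_def transpose_diff)
  have "A \<bullet> A = G \<bullet> A - G \<bullet> transpose A"
    by (simp add: A_def inner_diff_left inner_transpose_transpose)
  also have "\<dots> = 0"
    using orth[OF antisym] antisym by simp
  finally show ?thesis
    by (simp add: A_def)
qed

lemma inner_nonneg_if_bounded_below_on_psd:
  assumes bound: "\<And>Z. psd_matrix Z \<Longrightarrow> b \<le> a + G \<bullet> Z" and "psd_matrix Z"
  shows "0 \<le> G \<bullet> Z"
proof (rule nonneg_if_bounded_below_on_ray)
  fix s :: real
  assume "0 \<le> s"
  then show "b \<le> a + s * (G \<bullet> Z)"
    using bound[of "s *\<^sub>R Z"] psd_matrix_scaleR[OF \<open>psd_matrix Z\<close>] by simp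
qed

definition dominates_neg :: "real^'n^'n \<Rightarrow> real^'n^'n \<Rightarrow> bool" where
  "dominates_neg P \<Gamma> \<longleftrightarrow> psd_matrix \<Gamma> \<and> psd_matrix (P + \<Gamma>)"

lemma convex_matrix_interval_epigraph:
  fixes W P :: "real^'n^'n"
  shows "convex {(W - X - Z + A, P \<bullet> X + r) | X Z A r.
    psd_matrix X \<and> psd_matrix Z \<and> transpose A = - A \<and> 0 \<le> r}"
  unfolding convex_def
proof (intro ballI allI impI)
  fix p q and u v :: real
  assume "p \<in> {(W - X - Z + A, P \<bullet> X + r) | X Z A r.
      psd_matrix X \<and> psd_matrix Z \<and> transpose A = - A \<and> 0 \<le> r}"
    and "q \<in> {(W - X - Z + A, P \<bullet> X + r) | X Z A r.
      psd_matrix X \<and> psd_matrix Z \<and> transpose A = - A \<and> 0 \<le> r}"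
    and uv: "0 \<le> u" "0 \<le> v" "u + v = 1"
  then obtain X1 Z1 A1 r1 X2 Z2 A2 r2 where
    p: "p = (W - X1 - Z1 + A1, P \<bullet> X1 + r1)" "psd_matrix X1" "psd_matrix Z1"
      "transpose A1 = - A1" "0 \<le> r1" and
    q: "q = (W - X2 - Z2 + A2, P \<bullet> X2 + r2)" "psd_matrix X2" "psd_matrix Z2"
      "transpose A2 = - A2" "0 \<le> r2"
    by blast
  have "u *\<^sub>R p + v *\<^sub>R q = (W - (u *\<^sub>R X1 + v *\<^sub>R X2) - (u *\<^sub>R Z1 + v *\<^sub>R Z2)
      + (u *\<^sub>R A1 + v *\<^sub>R A2), P \<bullet> (u *\<^sub>R X1 + v *\<^sub>R X2) + (u * r1 + v * r2))"
    using uv(3) by (simp add: p(1) q(1) inner_add_right algebra_simps flip: scaleR_add_left)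
  moreover have "transpose (u *\<^sub>R A1 + v *\<^sub>R A2) = - (u *\<^sub>R A1 + v *\<^sub>R A2)"
    using p(4) q(4) by (simp add: transpose_add transpose_scalar)
  ultimately show "u *\<^sub>R p + v *\<^sub>R q \<in> {(W - X - Z + A, P \<bullet> X + r) | X Z A r.
      psd_matrix X \<and> psd_matrix Z \<and> transpose A = - A \<and> 0 \<le> r}"
    using p q uv by (blast intro: psd_matrix_add psd_matrix_scaleR add_nonneg_nonneg mult_nonneg_nonneg)
qed

lemma matrix_interval_separation:
  fixes W P :: "real^'n^'n"
  assumes "psd_matrix W"
    and lower: "\<And>X. psd_matrix X \<Longrightarrow> psd_matrix (W - X) \<Longrightarrow> m \<le> P \<bullet> X"
    and "0 < \<eta>"
  obtains G g b where "(G, g) \<noteq> 0" "g * (m - \<eta>) \<le> b"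
    "\<And>X Z A r. psd_matrix X \<Longrightarrow> psd_matrix Z \<Longrightarrow> transpose A = - A \<Longrightarrow> 0 \<le> r \<Longrightarrow>
      b \<le> G \<bullet> W + (g *\<^sub>R P - G) \<bullet> X + (- G) \<bullet> Z + G \<bullet> A + g * r"
proof -
  \<comment> \<open>the antisymmetric summands \<open>A\<close> force the separating matrix to be symmetric\<close>
  define S where "S = {(W - X - Z + A, P \<bullet> X + r) | X Z A r.
    psd_matrix X \<and> psd_matrix Z \<and> transpose A = - A \<and> 0 \<le> r}"
  define T :: "((real^'n^'n) \<times> real) set" where "T = {0} \<times> {.. m - \<eta>}"
  have "(W - 0 - 0 + 0, P \<bullet> 0 + 0) \<in> S"
    unfolding S_def by (rule CollectI, (rule exI[of _ 0])+) (simp add: psd_matrix_0)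
  moreover have "T \<inter> S = {}"
  proof (rule ccontr)
    assume "T \<inter> S \<noteq> {}"
    then obtain X Z A r where XZA: "W - X - Z + A = 0" "P \<bullet> X + r \<le> m - \<eta>"
      "psd_matrix X" "psd_matrix Z" "transpose A = - A" "0 \<le> r"
      unfolding S_def T_def by auto
    have "A = Z - (W - X)"
      using XZA(1) by (simp add: algebra_simps)
    then have "transpose A = A"
      using XZA(3,4) \<open>psd_matrix W\<close> by (simp add: psd_matrix_def transpose_diff)
    then have "W - X = Z"
      using XZA(1,5) by (simp add: vec_eq_iff algebra_simps)
    then show False
      using lower[OF XZA(3)] XZA(2,4,6) \<open>0 < \<eta>\<close> by simp
  qed
  moreover have "convex T"
    unfolding T_def by (intro convex_Times convex_singleton convex_real_interval)
  ultimately obtain a b where "a \<noteq> 0" and sep_T: "\<forall>x\<in>T. a \<bullet> x \<le> b" and sep_S: "\<forall>x\<in>S. b \<le> a \<bullet> x"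
    using separating_hyperplane_sets[of T S] convex_matrix_interval_epigraph[of W P]
    unfolding S_def T_def by blast
  obtain G g where a: "a = (G, g)"
    by (cases a)
  show ?thesis
  proof (rule that)
    show "(G, g) \<noteq> 0" "g * (m - \<eta>) \<le> b"
      using \<open>a \<noteq> 0\<close> sep_T unfolding a T_def by simp_all
    fix X Z A :: "real^'n^'n" and r :: real
    assume "psd_matrix X" "psd_matrix Z" "transpose A = - A" "0 \<le> r"
    then have "b \<le> (G, g) \<bullet> (W - X - Z + A, P \<bullet> X + r)"
      using sep_S unfolding S_def a by blast
    then show "b \<le> G \<bullet> W + (g *\<^sub>R P - G) \<bullet> X + (- G) \<bullet> Z + G \<bullet> A + g * r"
      by (simp add: inner_diff_left inner_diff_right inner_add_right algebra_simps)
  qed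
qed

lemma inf_matrix_interval_le_dual:
  fixes W P :: "real^'n^'n"
  assumes W: "psd_matrix (W - \<delta> *\<^sub>R mat 1)" "0 < \<delta>" and P: "transpose P = P"
    and lower: "\<And>X. psd_matrix X \<Longrightarrow> psd_matrix (W - X) \<Longrightarrow> m \<le> P \<bullet> X"
    and "0 < \<eta>"
  shows "\<exists>\<Gamma>. dominates_neg P \<Gamma> \<and> m - \<eta> \<le> - (W \<bullet> \<Gamma>)"
proof -
  obtain G g b where "(G, g) \<noteq> 0" and le_b: "g * (m - \<eta>) \<le> b"
    and sep: "\<And>X Z A r. psd_matrix X \<Longrightarrow> psd_matrix Z \<Longrightarrow> transpose A = - A \<Longrightarrow> 0 \<le> r \<Longrightarrow>
      b \<le> G \<bullet> W + (g *\<^sub>R P - G) \<bullet> X + (- G) \<bullet> Z + G \<bullet> A + g * r"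
    using matrix_interval_separation[OF psd_matrix_if_psd_diff_mat1[OF W(1)] lower \<open>0 < \<eta>\<close>] W(2)
    by auto
  have "transpose G = G"
    by (rule symmetric_if_bounded_below_on_antisymmetric[of b "G \<bullet> W"])
      (use sep[OF psd_matrix_0 psd_matrix_0 _ order_refl] in simp)
  have neg_G_inner: "0 \<le> - G \<bullet> Z" if "psd_matrix Z" for Z
    by (rule inner_nonneg_if_bounded_below_on_psd[of b "G \<bullet> W"])
      (use sep[OF psd_matrix_0 _ _ order_refl, of _ 0] that in simp_all)
  have neg_G: "psd_matrix (- G)"
    using neg_G_inner \<open>transpose G = G\<close> by (simp add: psd_matrixI_dual transpose_uminus)
  have gP_G: "psd_matrix (g *\<^sub>R P - G)"
  proof (rule psd_matrixI_dual)
    show "0 \<le> (g *\<^sub>R P - G) \<bullet> X" if "psd_matrix X" for X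
      by (rule inner_nonneg_if_bounded_below_on_psd[of b "G \<bullet> W"])
        (use sep[OF _ psd_matrix_0 _ order_refl, of _ 0] that in simp_all)
  qed (simp add: P \<open>transpose G = G\<close> transpose_diff transpose_scalar)
  have "0 \<le> g"
    by (rule nonneg_if_bounded_below_on_ray[of b "G \<bullet> W"])
      (use sep[OF psd_matrix_0 psd_matrix_0, of 0] in \<open>simp add: mult.commute\<close>)
  have b_le: "b \<le> G \<bullet> W"
    using sep[OF psd_matrix_0 psd_matrix_0, of 0 0] by simp
  have "g \<noteq> 0"
  proof
    assume "g = 0"
    \<comment> \<open>\<open>G \<bullet> W \<ge> 0\<close>, while \<open>- G \<succeq> 0\<close> and \<open>W \<succeq> \<delta> I\<close> force \<open>G \<bullet> W \<le> \<delta> trace G \<le> 0\<close>\<close>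
    have "G \<bullet> W = - ((- G) \<bullet> (W - \<delta> *\<^sub>R mat 1)) + \<delta> * trace G"
      by (simp add: inner_diff_right inner_mat1 trace_uminus)
    also have "\<dots> \<le> \<delta> * trace G"
      using neg_G_inner[OF W(1)] by simp
    finally have "0 \<le> \<delta> * trace G"
      using b_le le_b \<open>g = 0\<close> by simp
    then have "trace (- G) = 0"
      using trace_psd_nonneg[OF neg_G] W(2) by (simp add: trace_uminus zero_le_mult_iff)
    then have "G = 0"
      using psd_matrix_trace_eq_0[OF neg_G] by simp
    with \<open>g = 0\<close> \<open>(G, g) \<noteq> 0\<close> show False
      by (simp add: zero_prod_def)
  qed
  with \<open>0 \<le> g\<close> have "0 < g" by simp
  define \<Gamma> where "\<Gamma> = (1 / g) *\<^sub>R (- G)"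
  have "psd_matrix (P + \<Gamma>)"
    using psd_matrix_scaleR[OF gP_G, of "1 / g"] \<open>0 < g\<close> by (simp add: \<Gamma>_def algebra_simps)
  moreover have "psd_matrix \<Gamma>"
    using psd_matrix_scaleR[OF neg_G, of "1 / g"] \<open>0 < g\<close> by (simp add: \<Gamma>_def)
  moreover have "m - \<eta> \<le> - (W \<bullet> \<Gamma>)"
    using b_le le_b \<open>0 < g\<close> by (simp add: \<Gamma>_def inner_commute field_simps)
  ultimately show ?thesis
    unfolding dominates_neg_def by blast
qed

lemma matrix_interval_duality:
  fixes W P :: "real^'n^'n"
  assumes W: "psd_matrix (W - \<delta> *\<^sub>R mat 1)" "0 < \<delta>" and P: "transpose P = P" and "0 < \<eta>"
  shows "\<exists>\<Gamma> X. dominates_neg P \<Gamma> \<and> psd_matrix X \<and> psd_matrix (W - X) \<and> P \<bullet> X \<le> \<eta> - W \<bullet> \<Gamma>"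
proof -
  define F where "F = {P \<bullet> X | X. psd_matrix X \<and> psd_matrix (W - X)}"
  have "psd_matrix W"
    using psd_matrix_if_psd_diff_mat1[OF W(1)] W(2) by simp
  then have "P \<bullet> 0 \<in> F"
    unfolding F_def by (intro CollectI exI[of _ 0]) (simp add: psd_matrix_0)
  have "bdd_below F"
    unfolding F_def using abs_inner_matrix_interval_le[of _ W P]
    by (intro bdd_belowI[of _ "- (\<Sum>i\<in>UNIV. \<Sum>j\<in>UNIV. \<bar>P$i$j\<bar>) * trace W"]) (force simp: abs_le_iff)
  have "Inf F < Inf F + \<eta> / 2"
    using \<open>0 < \<eta>\<close> by simp
  then obtain X where X: "psd_matrix X" "psd_matrix (W - X)" "P \<bullet> X < Inf F + \<eta> / 2"
    using cInf_lessD[of F] \<open>P \<bullet> 0 \<in> F\<close> unfolding F_def by blast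
  have "Inf F \<le> P \<bullet> X'" if "psd_matrix X'" "psd_matrix (W - X')" for X'
    using that \<open>bdd_below F\<close> unfolding F_def by (blast intro: cInf_lower)
  then obtain \<Gamma> where "dominates_neg P \<Gamma>" "Inf F - \<eta> / 2 \<le> - (W \<bullet> \<Gamma>)"
    using inf_matrix_interval_le_dual[OF W P, of "Inf F" "\<eta> / 2"] \<open>0 < \<eta>\<close> by auto
  with X show ?thesis
    by (intro exI[of _ \<Gamma>] exI[of _ X]) auto
qed

lemma dominates_neg_onorm: "transpose P = P \<Longrightarrow> dominates_neg P (onorm ((*v) P) *\<^sub>R mat 1)"
  unfolding dominates_neg_def
  using psd_matrix_add_onorm psd_matrix_scaleR[OF psd_matrix_mat1 onorm_pos_le[OF matrix_vector_mul_bounded_linear]]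
  by blast

lemma convex_dominates_neg_sums:
  fixes P :: "'i \<Rightarrow> real^'n^'n"
  shows "convex {(\<Sum>i\<in>I. \<Gamma> i) + Z + A | \<Gamma> Z A.
    (\<forall>i\<in>I. dominates_neg (P i) (\<Gamma> i)) \<and> psd_matrix Z \<and> transpose A = - A}"
  unfolding convex_def
proof (intro ballI allI impI)
  fix p q and u v :: real
  assume "p \<in> {(\<Sum>i\<in>I. \<Gamma> i) + Z + A | \<Gamma> Z A.
      (\<forall>i\<in>I. dominates_neg (P i) (\<Gamma> i)) \<and> psd_matrix Z \<and> transpose A = - A}"
    and "q \<in> {(\<Sum>i\<in>I. \<Gamma> i) + Z + A | \<Gamma> Z A.
      (\<forall>i\<in>I. dominates_neg (P i) (\<Gamma> i)) \<and> psd_matrix Z \<and> transpose A = - A}"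
    and uv: "0 \<le> u" "0 \<le> v" "u + v = 1"
  then obtain \<Gamma>1 Z1 A1 \<Gamma>2 Z2 A2 where
    p: "p = (\<Sum>i\<in>I. \<Gamma>1 i) + Z1 + A1" "\<forall>i\<in>I. dominates_neg (P i) (\<Gamma>1 i)" "psd_matrix Z1"
      "transpose A1 = - A1" and
    q: "q = (\<Sum>i\<in>I. \<Gamma>2 i) + Z2 + A2" "\<forall>i\<in>I. dominates_neg (P i) (\<Gamma>2 i)" "psd_matrix Z2"
      "transpose A2 = - A2"
    by blast
  define \<Gamma> where "\<Gamma> i = u *\<^sub>R \<Gamma>1 i + v *\<^sub>R \<Gamma>2 i" for i
  have "u *\<^sub>R p + v *\<^sub>R q = (\<Sum>i\<in>I. \<Gamma> i) + (u *\<^sub>R Z1 + v *\<^sub>R Z2) + (u *\<^sub>R A1 + v *\<^sub>R A2)"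
    by (simp add: p(1) q(1) \<Gamma>_def sum.distrib scaleR_sum_right algebra_simps)
  moreover have "dominates_neg (P i) (\<Gamma> i)" if "i \<in> I" for i
  proof -
    have "P i + \<Gamma> i = u *\<^sub>R (P i + \<Gamma>1 i) + v *\<^sub>R (P i + \<Gamma>2 i)"
      using uv(3) by (simp add: \<Gamma>_def algebra_simps flip: scaleR_add_left)
    moreover have "psd_matrix (u *\<^sub>R (P i + \<Gamma>1 i) + v *\<^sub>R (P i + \<Gamma>2 i))" "psd_matrix (\<Gamma> i)"
      using p(2) q(2) that uv unfolding \<Gamma>_def dominates_neg_def
      by (blast intro: psd_matrix_add psd_matrix_scaleR)+
    ultimately show ?thesis
      by (simp add: dominates_neg_def)
  qed
  moreover have "transpose (u *\<^sub>R A1 + v *\<^sub>R A2) = - (u *\<^sub>R A1 + v *\<^sub>R A2)"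
    using p(4) q(4) by (simp add: transpose_add transpose_scalar)
  ultimately show "u *\<^sub>R p + v *\<^sub>R q \<in> {(\<Sum>i\<in>I. \<Gamma> i) + Z + A | \<Gamma> Z A.
      (\<forall>i\<in>I. dominates_neg (P i) (\<Gamma> i)) \<and> psd_matrix Z \<and> transpose A = - A}"
    using p(3) q(3) uv by (blast intro: psd_matrix_add psd_matrix_scaleR)
qed

lemma dominates_neg_sum_separation:
  fixes P :: "'i \<Rightarrow> real^'n^'n"
  assumes \<Gamma>\<^sub>0: "\<forall>i\<in>I. dominates_neg (P i) (\<Gamma>\<^sub>0 i)"
    and none: "\<not> (\<exists>\<Gamma>. (\<forall>i\<in>I. dominates_neg (P i) (\<Gamma> i)) \<and> psd_matrix (t *\<^sub>R mat 1 - (\<Sum>i\<in>I. \<Gamma> i)))"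
  obtains H b where "H \<noteq> 0" "\<And>Z. psd_matrix Z \<Longrightarrow> H \<bullet> (t *\<^sub>R mat 1 - Z) \<le> b"
    "\<And>\<Gamma> Z A. \<forall>i\<in>I. dominates_neg (P i) (\<Gamma> i) \<Longrightarrow> psd_matrix Z \<Longrightarrow> transpose A = - A \<Longrightarrow>
      b \<le> H \<bullet> ((\<Sum>i\<in>I. \<Gamma> i) + Z + A)"
proof -
  define S where "S = {(\<Sum>i\<in>I. \<Gamma> i) + Z + A | \<Gamma> Z A.
    (\<forall>i\<in>I. dominates_neg (P i) (\<Gamma> i)) \<and> psd_matrix Z \<and> transpose A = - A}"
  define T :: "(real^'n^'n) set" where "T = {t *\<^sub>R mat 1 - Z | Z. psd_matrix Z}"
  have "convex S"
    unfolding S_def by (rule convex_dominates_neg_sums)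
  have "convex T"
    unfolding convex_def
  proof (intro ballI allI impI)
    fix p q and u v :: real
    assume "p \<in> T" "q \<in> T" and uv: "0 \<le> u" "0 \<le> v" "u + v = 1"
    then obtain Z1 Z2 where "p = t *\<^sub>R mat 1 - Z1" "psd_matrix Z1" "q = t *\<^sub>R mat 1 - Z2" "psd_matrix Z2"
      unfolding T_def by blast
    moreover have "u *\<^sub>R (t *\<^sub>R mat 1 - Z1) + v *\<^sub>R (t *\<^sub>R mat 1 - Z2) =
        t *\<^sub>R mat 1 - (u *\<^sub>R Z1 + v *\<^sub>R Z2)"
      using uv(3) by (simp add: algebra_simps flip: scaleR_add_left distrib_left)
    ultimately show "u *\<^sub>R p + v *\<^sub>R q \<in> T"
      unfolding T_def using uv by (blast intro: psd_matrix_add psd_matrix_scaleR)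
  qed
  have "S \<noteq> {}"
  proof -
    have "(\<Sum>i\<in>I. \<Gamma>\<^sub>0 i) + 0 + 0 \<in> S"
      unfolding S_def using \<Gamma>\<^sub>0 psd_matrix_0
      by (intro CollectI exI[of _ \<Gamma>\<^sub>0] exI[of _ 0] conjI) simp_all
    then show ?thesis
      by blast
  qed
  have "T \<noteq> {}"
  proof -
    have "t *\<^sub>R mat 1 - 0 \<in> T"
      unfolding T_def using psd_matrix_0 by blast
    then show ?thesis
      by blast
  qed
  have "T \<inter> S = {}"
  proof (rule ccontr)
    assume "T \<inter> S \<noteq> {}"
    then obtain x where "x \<in> T" "x \<in> S"
      by blast
    then obtain Z' \<Gamma> Z A where eq: "t *\<^sub>R mat 1 - Z' = (\<Sum>i\<in>I. \<Gamma> i) + Z + A" and "psd_matrix Z'"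
      and \<Gamma>: "\<forall>i\<in>I. dominates_neg (P i) (\<Gamma> i)" and "psd_matrix Z" "transpose A = - A"
      unfolding S_def T_def by blast
    have "transpose (\<Sum>i\<in>I. \<Gamma> i) = (\<Sum>i\<in>I. \<Gamma> i)"
      using \<Gamma> by (simp add: transpose_sum dominates_neg_def psd_matrix_def)
    moreover have "A = t *\<^sub>R mat 1 - Z' - (\<Sum>i\<in>I. \<Gamma> i) - Z"
      using eq by (simp add: algebra_simps)
    ultimately have "transpose A = A"
      using \<open>psd_matrix Z\<close> \<open>psd_matrix Z'\<close> by (simp add: transpose_diff transpose_scalar psd_matrix_def)
    then have "t *\<^sub>R mat 1 - (\<Sum>i\<in>I. \<Gamma> i) = Z + Z'"
      using eq \<open>transpose A = - A\<close> by (simp add: vec_eq_iff algebra_simps)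
    then have "psd_matrix (t *\<^sub>R mat 1 - (\<Sum>i\<in>I. \<Gamma> i))"
      using psd_matrix_add[OF \<open>psd_matrix Z\<close> \<open>psd_matrix Z'\<close>] by simp
    with none \<Gamma> show False
      by blast
  qed
  obtain H b where "H \<noteq> 0" and sep_T: "\<forall>x\<in>T. H \<bullet> x \<le> b" and sep_S: "\<forall>x\<in>S. b \<le> H \<bullet> x"
    using separating_hyperplane_sets[OF \<open>convex T\<close> \<open>convex S\<close> \<open>T \<noteq> {}\<close> \<open>S \<noteq> {}\<close> \<open>T \<inter> S = {}\<close>]
    by blast
  show ?thesis
  proof (rule that[OF \<open>H \<noteq> 0\<close>])
    show "H \<bullet> (t *\<^sub>R mat 1 - Z) \<le> b" if "psd_matrix Z" for Z
      using sep_T that unfolding T_def by blast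
    show "b \<le> H \<bullet> ((\<Sum>i\<in>I. \<Gamma> i) + Z + A)"
      if "\<forall>i\<in>I. dominates_neg (P i) (\<Gamma> i)" "psd_matrix Z" "transpose A = - A" for \<Gamma> Z A
      using sep_S that unfolding S_def by blast
  qed
qed

lemma dominates_neg_sum_alternative:
  fixes P :: "'i \<Rightarrow> real^'n^'n"
  assumes P: "\<And>i. i \<in> I \<Longrightarrow> transpose (P i) = P i"
  shows "(\<exists>W. psd_matrix W \<and> trace W = 1 \<and>
         (\<forall>\<Gamma>. (\<forall>i\<in>I. dominates_neg (P i) (\<Gamma> i)) \<longrightarrow> t \<le> W \<bullet> (\<Sum>i\<in>I. \<Gamma> i)))
    \<or> (\<exists>\<Gamma>. (\<forall>i\<in>I. dominates_neg (P i) (\<Gamma> i)) \<and> psd_matrix (t *\<^sub>R mat 1 - (\<Sum>i\<in>I. \<Gamma> i)))"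
proof (rule disjCI)
  define \<Gamma>\<^sub>0 where "\<Gamma>\<^sub>0 i = onorm ((*v) (P i)) *\<^sub>R (mat 1 :: real^'n^'n)" for i
  have \<Gamma>\<^sub>0: "\<forall>i\<in>I. dominates_neg (P i) (\<Gamma>\<^sub>0 i)"
    unfolding \<Gamma>\<^sub>0_def using P by (blast intro: dominates_neg_onorm)
  assume none: "\<not> (\<exists>\<Gamma>. (\<forall>i\<in>I. dominates_neg (P i) (\<Gamma> i)) \<and> psd_matrix (t *\<^sub>R mat 1 - (\<Sum>i\<in>I. \<Gamma> i)))"
  obtain H b where "H \<noteq> 0" and sep_T: "\<And>Z. psd_matrix Z \<Longrightarrow> H \<bullet> (t *\<^sub>R mat 1 - Z) \<le> b"
    and sep_S: "\<And>\<Gamma> Z A. \<forall>i\<in>I. dominates_neg (P i) (\<Gamma> i) \<Longrightarrow> psd_matrix Z \<Longrightarrow> transpose A = - A \<Longrightarrow>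
      b \<le> H \<bullet> ((\<Sum>i\<in>I. \<Gamma> i) + Z + A)"
    using dominates_neg_sum_separation[OF \<Gamma>\<^sub>0 none] by blast
  have "transpose H = H"
    by (rule symmetric_if_bounded_below_on_antisymmetric[of b "H \<bullet> (\<Sum>i\<in>I. \<Gamma>\<^sub>0 i)"])
      (use sep_S[OF \<Gamma>\<^sub>0 psd_matrix_0] in \<open>simp add: inner_add_right\<close>)
  have bound: "- b \<le> - (t * trace H) + H \<bullet> Z" if "psd_matrix Z" for Z
    using sep_T[OF that] by (simp add: inner_diff_right inner_mat1)
  have "psd_matrix H"
  proof (rule psd_matrixI_dual[OF \<open>transpose H = H\<close>])
    show "0 \<le> H \<bullet> Z" if "psd_matrix Z" for Z
      by (rule inner_nonneg_if_bounded_below_on_psd[OF bound that])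
  qed
  have "trace H \<noteq> 0"
    using psd_matrix_trace_eq_0[OF \<open>psd_matrix H\<close>] \<open>H \<noteq> 0\<close> by blast
  then have "0 < trace H"
    using trace_psd_nonneg[OF \<open>psd_matrix H\<close>] by simp
  define W where "W = (1 / trace H) *\<^sub>R H"
  have "psd_matrix W"
    unfolding W_def using \<open>psd_matrix H\<close> \<open>0 < trace H\<close> by (simp add: psd_matrix_scaleR)
  moreover have "trace W = 1"
    unfolding W_def using \<open>0 < trace H\<close> by (simp add: trace_scaleR)
  moreover have "t \<le> W \<bullet> (\<Sum>i\<in>I. \<Gamma> i)" if "\<forall>i\<in>I. dominates_neg (P i) (\<Gamma> i)" for \<Gamma>
  proof -
    have "t * trace H \<le> H \<bullet> (\<Sum>i\<in>I. \<Gamma> i)"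
      using sep_S[OF that psd_matrix_0, of 0] sep_T[OF psd_matrix_0] by (simp add: inner_mat1)
    then show ?thesis
      unfolding W_def using \<open>0 < trace H\<close> by (simp add: field_simps)
  qed
  ultimately show "\<exists>W. psd_matrix W \<and> trace W = 1 \<and>
      (\<forall>\<Gamma>. (\<forall>i\<in>I. dominates_neg (P i) (\<Gamma> i)) \<longrightarrow> t \<le> W \<bullet> (\<Sum>i\<in>I. \<Gamma> i))"
    by (intro exI[of _ W]) simp
qed

subsection \<open>Big matrices as arrays of 4 by 4 blocks\<close>

definition idx4_inv :: "4 \<Rightarrow> nat" where
  "idx4_inv k = (if k = 1 then 0 else if k = 2 then 1 else if k = 3 then 2 else 3)"

lemma idx4_inv_less: "idx4_inv k < 4"
  by (simp add: idx4_inv_def)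

lemma idx4_idx4_inv [simp]: "idx4 (idx4_inv k) = k"
  using exhaust_4[of k] by (auto simp: idx4_inv_def idx4_def)

lemma idx4_inv_idx4 [simp]: "p < 4 \<Longrightarrow> idx4_inv (idx4 p) = p"
  by (auto simp: idx4_inv_def idx4_def less_Suc_eq numeral_eq_Suc)

lemma idx4_eq_iff: "p < 4 \<Longrightarrow> q < 4 \<Longrightarrow> idx4 p = idx4 q \<longleftrightarrow> p = q"
  by (metis idx4_inv_idx4)

lemma block_index_less: "i < m \<Longrightarrow> 4 * i + idx4_inv p < 4 * m"
  using idx4_inv_less[of p] by linarith

lemma div_block_index [simp]: "(4 * i + idx4_inv p) div 4 = i"
  using idx4_inv_less[of p] by simp

lemma mod_block_index [simp]: "(4 * i + idx4_inv p) mod 4 = idx4_inv p"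
  using idx4_inv_less[of p] by simp

lemma sum_blocks: "(\<Sum>a<4*m. f a) = (\<Sum>i<m. \<Sum>k\<in>UNIV. f (4*i + idx4_inv k))"
proof -
  have "(\<Sum>a<4*m. f a) = (\<Sum>(i, k)\<in>{..<m} \<times> UNIV. f (4*i + idx4_inv k))"
    by (rule sum.reindex_bij_witness[where i = "\<lambda>(i, k). 4*i + idx4_inv k"
          and j = "\<lambda>a. (a div 4, idx4 (a mod 4))"])
      (auto simp: idx4_inv_less block_index_less)
  then show ?thesis
    by (simp add: sum.cartesian_product)
qed

definition block :: "(nat \<Rightarrow> nat \<Rightarrow> real) \<Rightarrow> nat \<Rightarrow> nat \<Rightarrow> real^4^4" where
  "block M i j = (\<chi> p q. M (4*i + idx4_inv p) (4*j + idx4_inv q))"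

definition vblock :: "(nat \<Rightarrow> real) \<Rightarrow> nat \<Rightarrow> real^4" where
  "vblock v i = (\<chi> p. v (4*i + idx4_inv p))"

definition of_blocks :: "(nat \<Rightarrow> nat \<Rightarrow> real^4^4) \<Rightarrow> nat \<Rightarrow> nat \<Rightarrow> real" where
  "of_blocks B a b = B (a div 4) (b div 4) $ idx4 (a mod 4) $ idx4 (b mod 4)"

lemma block_of_blocks [simp]: "block (of_blocks B) i j = B i j"
  by (simp add: block_def of_blocks_def idx4_inv_less vec_eq_iff)

lemma of_blocks_symmetric:
  assumes "\<And>i j. i \<le> l \<Longrightarrow> j \<le> l \<Longrightarrow> B j i = transpose (B i j)" "a < 4 * Suc l" "b < 4 * Suc l"
  shows "of_blocks B b a = of_blocks B a b"
  using assms(1)[of "a div 4" "b div 4"] assms(2,3) by (simp add: of_blocks_def transpose_def)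

lemma block_transpose:
  assumes "\<forall>a<4*m. \<forall>b<4*m. M a b = M b a" "i < m" "j < m"
  shows "block M j i = transpose (block M i j)"
  using assms block_index_less by (simp add: block_def transpose_def vec_eq_iff)

lemma quadratic_form_blocks:
  "(\<Sum>a<4*m. \<Sum>b<4*m. v a * M a b * v b) = (\<Sum>i<m. \<Sum>j<m. vblock v i \<bullet> (block M i j *v vblock v j))"
proof -
  have "(\<Sum>a<4*m. \<Sum>b<4*m. v a * M a b * v b) = (\<Sum>i<m. \<Sum>p\<in>UNIV. \<Sum>j<m. \<Sum>q\<in>UNIV.
      v (4*i + idx4_inv p) * M (4*i + idx4_inv p) (4*j + idx4_inv q) * v (4*j + idx4_inv q))"
    by (simp add: sum_blocks)
  also have "\<dots> = (\<Sum>i<m. \<Sum>j<m. \<Sum>p\<in>UNIV. \<Sum>q\<in>UNIV.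
      v (4*i + idx4_inv p) * M (4*i + idx4_inv p) (4*j + idx4_inv q) * v (4*j + idx4_inv q))"
    by (rule sum.cong[OF refl], rule sum.swap)
  finally show ?thesis
    by (simp add: quadratic_form_eq vblock_def block_def)
qed

lemma trace_product_blocks:
  "(\<Sum>a<4*m. \<Sum>b<4*m. A a b * B b a) = (\<Sum>i<m. \<Sum>j<m. block A i j \<bullet> transpose (block B j i))"
proof -
  have "(\<Sum>a<4*m. \<Sum>b<4*m. A a b * B b a) = (\<Sum>i<m. \<Sum>p\<in>UNIV. \<Sum>j<m. \<Sum>q\<in>UNIV.
      A (4*i + idx4_inv p) (4*j + idx4_inv q) * B (4*j + idx4_inv q) (4*i + idx4_inv p))"
    by (simp add: sum_blocks)
  also have "\<dots> = (\<Sum>i<m. \<Sum>j<m. \<Sum>p\<in>UNIV. \<Sum>q\<in>UNIV.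
      A (4*i + idx4_inv p) (4*j + idx4_inv q) * B (4*j + idx4_inv q) (4*i + idx4_inv p))"
    by (rule sum.cong[OF refl], rule sum.swap)
  finally show ?thesis
    by (simp add: inner_matrix_eq block_def transpose_def)
qed

lemma sum_arrow:
  fixes F :: "nat \<Rightarrow> nat \<Rightarrow> 'a::comm_monoid_add"
  assumes "\<And>i j. i \<le> l \<Longrightarrow> j \<le> l \<Longrightarrow> i \<noteq> j \<Longrightarrow> i \<noteq> 0 \<Longrightarrow> j \<noteq> 0 \<Longrightarrow> F i j = 0"
  shows "(\<Sum>i<Suc l. \<Sum>j<Suc l. F i j) = F 0 0 + (\<Sum>i\<in>{1..l}. F i i + F 0 i + F i 0)"
proof -
  have split: "{..<Suc l} = insert 0 {1..l}"
    by auto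
  have row: "(\<Sum>j<Suc l. F i j) = F i i + F i 0" if "i \<in> {1..l}" for i
  proof -
    have "(\<Sum>j\<in>{1..l}. F i j) = F i i + (\<Sum>j\<in>{1..l} - {i}. F i j)"
      using that by (simp add: sum.remove)
    also have "(\<Sum>j\<in>{1..l} - {i}. F i j) = 0"
      using that by (intro sum.neutral) (auto intro: assms)
    finally show ?thesis
      unfolding split by (simp add: add.commute)
  qed
  have "(\<Sum>i<Suc l. \<Sum>j<Suc l. F i j) = (\<Sum>j<Suc l. F 0 j) + (\<Sum>i\<in>{1..l}. \<Sum>j<Suc l. F i j)"
    unfolding split by simp
  also have "(\<Sum>i\<in>{1..l}. \<Sum>j<Suc l. F i j) = (\<Sum>i\<in>{1..l}. F i i + F i 0)"
    by (rule sum.cong[OF refl]) (rule row)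
  also have "(\<Sum>j<Suc l. F 0 j) = F 0 0 + (\<Sum>i\<in>{1..l}. F 0 i)"
    unfolding split by simp
  finally show ?thesis
    by (simp add: sum.distrib add_ac)
qed

subsection \<open>Gram decomposition of positive semidefinite arrays\<close>

lemma psd_symmetric: "psd n W \<Longrightarrow> a < n \<Longrightarrow> b < n \<Longrightarrow> W b a = W a b"
  by (simp add: psd_def)

lemma psd_two_point_form:
  assumes "psd n W" "a < n" "b < n"
  shows "0 \<le> s * s * W a a + 2 * s * t * W a b + t * t * W b b"
proof -
  have delta: "(\<Sum>x<n. g x * (if x = c then r else 0)) = g c * r" if "c < n" for g :: "nat \<Rightarrow> real" and c r
  proof -
    have "(\<Sum>x<n. g x * (if x = c then r else 0)) = (\<Sum>x<n. if x = c then g c * r else 0)"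
      by (rule sum.cong) auto
    then show ?thesis
      using that by simp
  qed
  define v where "v x = (if x = a then s else 0) + (if x = b then t else 0)" for x
  have support: "(\<Sum>x<n. g x * v x) = g a * s + g b * t" for g
    using delta[OF assms(2)] delta[OF assms(3)] by (simp add: v_def distrib_left sum.distrib)
  have "0 \<le> (\<Sum>x<n. \<Sum>y<n. v x * W x y * v y)"
    using assms(1) by (simp add: psd_def)
  also have "\<dots> = (\<Sum>x<n. (W x a * s + W x b * t) * v x)"
    using support[of "\<lambda>y. v _ * W _ y"] by (simp add: algebra_simps)
  also have "\<dots> = s * s * W a a + 2 * s * t * W a b + t * t * W b b"
    using support[of "\<lambda>x. W x a * s + W x b * t"] psd_symmetric[OF assms(1) assms(2,3)]
    by (simp add: algebra_simps)
  finally show ?thesis .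
qed

lemma psd_diag_nonneg: "psd n W \<Longrightarrow> a < n \<Longrightarrow> 0 \<le> W a a"
  using psd_two_point_form[of n W a a 1 0] by simp

lemma psd_zero_diag_row:
  assumes "psd n W" "a < n" "b < n" "W a a = 0"
  shows "W a b = 0"
proof (rule ccontr)
  assume "W a b \<noteq> 0"
  define s where "s = - (W b b + 1) / (2 * W a b)"
  have "2 * s * 1 * W a b = - (W b b + 1)"
    using \<open>W a b \<noteq> 0\<close> by (simp add: s_def)
  then show False
    using psd_two_point_form[OF assms(1-3), of s 1] assms(4) by simp
qed

text \<open>If \<open>W n n = 0\<close>, the divisions below yield \<open>0\<close> and the Schur complement is \<open>W\<close> itself.\<close>

lemma psd_schur_complement:
  assumes "psd (Suc n) W"
  shows "psd n (\<lambda>a b. W a b - W a n * W n b / W n n)"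
  unfolding psd_def
proof (intro conjI allI impI)
  fix a b
  assume "a < n" "b < n"
  then show "W a b - W a n * W n b / W n n = W b a - W b n * W n a / W n n"
    using psd_symmetric[OF assms, of a b] psd_symmetric[OF assms, of a n] psd_symmetric[OF assms, of b n]
    by simp
next
  fix v :: "nat \<Rightarrow> real"
  define d where "d = W n n"
  define s where "s = (\<Sum>b<n. W n b * v b)"
  define \<tau> where "\<tau> = - s / d"
  define v' where "v' a = (if a < n then v a else \<tau>)" for a
  have col: "(\<Sum>a<n. v a * W a n) = s"
    unfolding s_def using psd_symmetric[OF assms] by (intro sum.cong) (auto simp: mult.commute)
  have "0 \<le> (\<Sum>a<Suc n. \<Sum>b<Suc n. v' a * W a b * v' b)"
    using assms unfolding psd_def by blast
  also have "\<dots> = (\<Sum>a<n. \<Sum>b<n. v a * W a b * v b) + (\<Sum>a<n. v a * W a n) * \<tau>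
      + \<tau> * (\<Sum>b<n. W n b * v b) + \<tau> * d * \<tau>"
    by (simp add: v'_def d_def sum.distrib sum_distrib_left sum_distrib_right mult_ac)
  also have "\<dots> = (\<Sum>a<n. \<Sum>b<n. v a * W a b * v b) - s * s / d"
    unfolding col s_def[symmetric] \<tau>_def by (cases "d = 0") (simp_all add: field_simps)
  also have "s * s / d = (\<Sum>a<n. \<Sum>b<n. v a * (W a n * W n b / d) * v b)"
  proof -
    have "(\<Sum>a<n. \<Sum>b<n. v a * (W a n * W n b / d) * v b) =
        (\<Sum>a<n. v a * W a n) * (\<Sum>b<n. W n b * v b) / d"
      by (simp add: sum_product sum_divide_distrib mult_ac)
    then show ?thesis
      unfolding col s_def[symmetric] by simp
  qed
  finally show "0 \<le> (\<Sum>a<n. \<Sum>b<n. v a * (W a b - W a n * W n b / W n n) * v b)"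
    by (simp add: d_def algebra_simps sum_subtractf)
qed

lemma psd_gram: "psd n W \<Longrightarrow> \<exists>u. \<forall>a<n. \<forall>b<n. W a b = (\<Sum>k<n. u k a * u k b)"
proof (induction n arbitrary: W)
  case (Suc n)
  define d where "d = W n n"
  define w where "w a = W a n / sqrt d" for a
  obtain u where u: "\<forall>a<n. \<forall>b<n. W a b - W a n * W n b / d = (\<Sum>k<n. u k a * u k b)"
    using Suc.IH[OF psd_schur_complement[OF Suc.prems]] unfolding d_def by blast
  have sym: "W b a = W a b" if "a < Suc n" "b < Suc n" for a b
    using psd_symmetric[OF Suc.prems that] .
  have "0 \<le> d"
    unfolding d_def using psd_diag_nonneg[OF Suc.prems] by simp
  then have w_mult: "w a * w b = W a n * W b n / d" for a b
    by (simp add: w_def)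
  have last_col: "W a n * W n n / d = W a n" if "a < Suc n" for a
  proof (cases "d = 0")
    case True
    then have "W n a = 0"
      using psd_zero_diag_row[OF Suc.prems _ that] by (simp add: d_def)
    then show ?thesis
      using sym[OF that, of n] by simp
  qed (simp add: d_def)
  define u' where "u' k a = (if k < n then (if a < n then u k a else 0) else w a)" for k a
  have "W a b = (\<Sum>k<Suc n. u' k a * u' k b)" if "a < Suc n" "b < Suc n" for a b
  proof -
    have split: "(\<Sum>k<Suc n. u' k a * u' k b) = (\<Sum>k<n. u' k a * u' k b) + W a n * W b n / d"
      by (simp add: u'_def w_mult)
    show ?thesis
    proof (cases "a < n \<and> b < n")
      case True
      then have "W a b - W a n * W n b / d = (\<Sum>k<n. u' k a * u' k b)"
        using u by (simp add: u'_def)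
      then show ?thesis
        using sym[of n b] that unfolding split by (simp add: algebra_simps)
    next
      case False
      then have "(\<Sum>k<n. u' k a * u' k b) = 0"
        by (auto simp: u'_def)
      moreover have "W a b = W a n * W b n / d"
      proof (cases "a = n")
        case True
        then show ?thesis
          using last_col[OF that(2)] sym[of n b] that(2) by (simp add: mult.commute)
      next
        case False
        then have "b = n"
          using \<open>\<not> (a < n \<and> b < n)\<close> that by auto
        then show ?thesis
          using last_col[OF that(1)] by simp
      qed
      ultimately show ?thesis
        unfolding split by simp
    qed
  qed
  then show ?case
    by blast
qed simp

lemma psd_trace_product_nonneg:
  assumes "psd n A" "psd n B"
  shows "0 \<le> (\<Sum>a<n. \<Sum>b<n. A a b * B b a)"
proof -
  obtain u where u: "\<forall>a<n. \<forall>b<n. B a b = (\<Sum>k<n. u k a * u k b)"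
    using psd_gram[OF assms(2)] by blast
  have "(\<Sum>a<n. \<Sum>b<n. A a b * B b a) = (\<Sum>a<n. \<Sum>b<n. \<Sum>k<n. u k a * A a b * u k b)"
    using u by (intro sum.cong refl) (simp add: sum_distrib_left mult_ac)
  also have "\<dots> = (\<Sum>a<n. \<Sum>k<n. \<Sum>b<n. u k a * A a b * u k b)"
    by (rule sum.cong[OF refl], rule sum.swap)
  also have "\<dots> = (\<Sum>k<n. \<Sum>a<n. \<Sum>b<n. u k a * A a b * u k b)"
    by (rule sum.swap)
  also have "0 \<le> \<dots>"
    using assms(1) by (simp add: psd_def sum_nonneg)
  finally show ?thesis .
qed

subsection \<open>Strong duality\<close>

definition Qblocks :: "nat \<Rightarrow> (nat \<Rightarrow> real^3) \<Rightarrow> (nat \<Rightarrow> real^3) \<Rightarrow> (nat \<Rightarrow> real) \<Rightarrow> nat \<Rightarrow> nat \<Rightarrow> real^4^4" where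
  "Qblocks l y x c i j = (if i = 0 \<and> 1 \<le> j \<and> j \<le> l then (1/2) *\<^sub>R cost_shift y x c j
     else if j = 0 \<and> 1 \<le> i \<and> i \<le> l then (1/2) *\<^sub>R cost_shift y x c i else 0)"

definition Bblocks :: "nat \<Rightarrow> nat \<Rightarrow> real^4^4" where
  "Bblocks i j = (if i = 0 \<and> j = 0 then mat 1 else 0)"

lemma bigQ_of_blocks: "bigQ l y x c = of_blocks (Qblocks l y x c)"
proof (intro ext)
  fix a b :: nat
  have "(mat 1 :: real^4^4) $ idx4 (a mod 4) $ idx4 (b mod 4) = (if a mod 4 = b mod 4 then 1 else 0)"
    using idx4_eq_iff[of "a mod 4" "b mod 4"] by (simp add: mat_def)
  then show "bigQ l y x c a b = of_blocks (Qblocks l y x c) a b"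
    by (auto simp: bigQ_def of_blocks_def Qblocks_def cost_shift_def Let_def field_simps)
qed

lemma bigB_of_blocks: "bigB = of_blocks Bblocks"
proof (intro ext)
  fix a b :: nat
  have "a = b \<longleftrightarrow> a div 4 = b div 4 \<and> a mod 4 = b mod 4"
    by (metis div_mult_mod_eq)
  moreover have "a < 4 \<longleftrightarrow> a div 4 = 0"
    by auto
  ultimately show "bigB a b = of_blocks Bblocks a b"
    using idx4_eq_iff[of "a mod 4" "b mod 4"] by (auto simp: bigB_def of_blocks_def Bblocks_def mat_def)
qed

lemma mtrace_mmult_eq: "mtrace n (mmult n A B) = (\<Sum>a<n. \<Sum>b<n. A a b * B b a)"
  by (simp add: mtrace_def mmult_def)

lemma trace_block_00: "trace (block W 0 0) = (\<Sum>p<4. W p p)"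
proof -
  have "(\<Sum>p<4. W p p) = (\<Sum>k\<in>UNIV. W (idx4_inv k) (idx4_inv k))"
    by (rule sum.reindex_bij_witness[where i = idx4_inv and j = idx4]) (auto simp: idx4_inv_less)
  then show ?thesis
    by (simp add: trace_def block_def)
qed

lemma SDR_feasible_blocks:
  assumes "SDR_feasible l W"
  shows "transpose (block W 0 0) = block W 0 0" "trace (block W 0 0) = 1"
    and "\<And>i. i \<in> {1..l} \<Longrightarrow> transpose (block W i i) = block W i i"
    and "\<And>i. i \<in> {1..l} \<Longrightarrow> block W 0 i = block W i i"
    and "\<And>i. i \<in> {1..l} \<Longrightarrow> block W i 0 = block W i i"
proof -
  have sym: "\<forall>a<4 * Suc l. \<forall>b<4 * Suc l. W a b = W b a"
    using assms by (simp add: SDR_feasible_def psd_def dimS_def)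
  show "transpose (block W 0 0) = block W 0 0"
    using block_transpose[OF sym, of 0 0] by simp
  show "trace (block W 0 0) = 1"
    using assms by (simp add: SDR_feasible_def trace_block_00)
  fix i
  assume i: "i \<in> {1..l}"
  show sym_ii: "transpose (block W i i) = block W i i"
    using block_transpose[OF sym, of i i] i by simp
  show row: "block W 0 i = block W i i"
    using assms i idx4_inv_less by (simp add: SDR_feasible_def block_def vec_eq_iff)
  show "block W i 0 = block W i i"
    using block_transpose[OF sym, of 0 i] i row sym_ii by simp
qed

lemma trace_product_arrow:
  assumes W: "SDR_feasible l W"
    and arrow: "\<And>i j. i \<le> l \<Longrightarrow> j \<le> l \<Longrightarrow> i \<noteq> j \<Longrightarrow> i \<noteq> 0 \<Longrightarrow> j \<noteq> 0 \<Longrightarrow> block M i j = 0"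
  shows "mtrace (dimS l) (mmult (dimS l) M W) = block M 0 0 \<bullet> block W 0 0
    + (\<Sum>i\<in>{1..l}. (block M i i + block M 0 i + block M i 0) \<bullet> block W i i)"
proof -
  have "dimS l = 4 * Suc l"
    by (simp add: dimS_def)
  then have "mtrace (dimS l) (mmult (dimS l) M W) =
      (\<Sum>i<Suc l. \<Sum>j<Suc l. block M i j \<bullet> transpose (block W j i))"
    by (simp only: mtrace_mmult_eq trace_product_blocks)
  also have "\<dots> = block M 0 0 \<bullet> transpose (block W 0 0) + (\<Sum>i\<in>{1..l}.
      block M i i \<bullet> transpose (block W i i) + block M 0 i \<bullet> transpose (block W i 0)
      + block M i 0 \<bullet> transpose (block W 0 i))"
    by (rule sum_arrow) (simp add: arrow)
  also have "\<dots> = block M 0 0 \<bullet> block W 0 0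
      + (\<Sum>i\<in>{1..l}. (block M i i + block M 0 i + block M i 0) \<bullet> block W i i)"
    using SDR_feasible_blocks[OF W] by (simp add: inner_add_left)
  finally show ?thesis .
qed

lemma SDR_obj_eq:
  assumes "SDR_feasible l W"
  shows "SDR_obj l y x c W = (\<Sum>i\<in>{1..l}. cost_shift y x c i \<bullet> block W i i) + (\<Sum>i=1..l. (c i)\<^sup>2)"
proof -
  have "mtrace (dimS l) (mmult (dimS l) (bigQ l y x c) W) = block (bigQ l y x c) 0 0 \<bullet> block W 0 0
      + (\<Sum>i\<in>{1..l}. (block (bigQ l y x c) i i + block (bigQ l y x c) 0 i + block (bigQ l y x c) i 0)
          \<bullet> block W i i)"
    by (rule trace_product_arrow[OF assms]) (simp add: bigQ_of_blocks Qblocks_def)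
  also have "\<dots> = (\<Sum>i\<in>{1..l}. cost_shift y x c i \<bullet> block W i i)"
    by (auto simp: bigQ_of_blocks Qblocks_def intro!: sum.cong simp flip: scaleR_add_left)
  finally have "mtrace (dimS l) (mmult (dimS l) (bigQ l y x c) W) = (\<Sum>i\<in>{1..l}. cost_shift y x c i \<bullet> block W i i)" .
  then show ?thesis
    by (simp add: SDR_obj_def)
qed

lemma weak_duality:
  assumes W: "SDR_feasible l W" and D: "D_feasible l y x c \<mu> D"
  shows "\<mu> + (\<Sum>i=1..l. (c i)\<^sup>2) \<le> SDR_obj l y x c W"
proof -
  define M where "M = (\<lambda>a b. bigQ l y x c a b - \<mu> * bigB a b - D a b)"
  have adm: "admissible_dual l D" and "psd (dimS l) M"
    using D by (simp_all add: D_feasible_def M_def)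
  have "0 \<le> mtrace (dimS l) (mmult (dimS l) M W)"
    unfolding mtrace_mmult_eq using \<open>psd (dimS l) M\<close> W
    by (simp add: SDR_feasible_def psd_trace_product_nonneg)
  also have "\<dots> = (\<Sum>i\<in>{1..l}. cost_shift y x c i \<bullet> block W i i) - \<mu>"
  proof -
    have D_sym: "\<forall>a<4 * Suc l. \<forall>b<4 * Suc l. D a b = D b a"
      using adm by (simp add: admissible_dual_def dimS_def)
    have D_off: "block D i j = 0" if "i \<le> l" "j \<le> l" "\<not> (i = j \<and> 1 \<le> i \<or> i = 0 \<and> 1 \<le> j \<or> j = 0 \<and> 1 \<le> i)" for i j
      using adm that block_index_less[of i "Suc l"] block_index_less[of j "Suc l"]
      by (simp add: admissible_dual_def dimS_def block_def vec_eq_iff)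
    have D_diag: "block D i i = (- 2) *\<^sub>R block D 0 i" if "i \<in> {1..l}" for i
      using adm that idx4_inv_less by (simp add: admissible_dual_def block_def vec_eq_iff eq_neg_iff_add_eq_0)
    have blocks: "block M i j = Qblocks l y x c i j - \<mu> *\<^sub>R Bblocks i j - block D i j" for i j
      by (simp add: M_def block_def bigQ_of_blocks bigB_of_blocks vec_eq_iff
          flip: block_of_blocks[of "Qblocks l y x c"] block_of_blocks[of Bblocks])
    have "(block D i i + block D 0 i + block D i 0) \<bullet> block W i i = 0" if "i \<in> {1..l}" for i
      using that D_diag[OF that] block_transpose[OF D_sym, of 0 i] SDR_feasible_blocks(3)[OF W that]
      by (simp add: inner_add_left inner_diff_left inner_transpose_transpose)
    moreover have "mtrace (dimS l) (mmult (dimS l) M W) = block M 0 0 \<bullet> block W 0 0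
        + (\<Sum>i\<in>{1..l}. (block M i i + block M 0 i + block M i 0) \<bullet> block W i i)"
      by (rule trace_product_arrow[OF W]) (simp add: blocks D_off Qblocks_def Bblocks_def)
    ultimately show ?thesis
      using D_off[of 0 0] SDR_feasible_blocks(2)[OF W]
      by (auto simp: blocks Qblocks_def Bblocks_def inner_diff_left inner_add_left inner_commute[of "mat 1"]
          inner_mat1 algebra_simps sum.distrib sum_subtractf intro!: sum.cong simp flip: scaleR_add_left)
  qed
  finally show ?thesis
    using SDR_obj_eq[OF W] by simp
qed

definition dual_blocks :: "nat \<Rightarrow> (nat \<Rightarrow> real^4^4) \<Rightarrow> nat \<Rightarrow> nat \<Rightarrow> real^4^4" where
  "dual_blocks l S i j = (if i = j \<and> 1 \<le> i \<and> i \<le> l then - S i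
     else if i = 0 \<and> 1 \<le> j \<and> j \<le> l then (1/2) *\<^sub>R S j
     else if j = 0 \<and> 1 \<le> i \<and> i \<le> l then (1/2) *\<^sub>R S i else 0)"

lemma dual_blocks_transpose:
  "(\<And>i. i \<in> {1..l} \<Longrightarrow> transpose (S i) = S i) \<Longrightarrow> dual_blocks l S j i = transpose (dual_blocks l S i j)"
  by (auto simp: dual_blocks_def transpose_uminus transpose_scalar)

lemma admissible_dual_of_blocks:
  assumes "\<And>i. i \<in> {1..l} \<Longrightarrow> transpose (S i) = S i"
  shows "admissible_dual l (of_blocks (dual_blocks l S))"
  unfolding admissible_dual_def
proof (intro conjI)
  show "\<forall>a<dimS l. \<forall>b<dimS l. of_blocks (dual_blocks l S) a b = of_blocks (dual_blocks l S) b a"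
    using of_blocks_symmetric[of l "dual_blocks l S", OF dual_blocks_transpose[OF assms]]
    by (simp add: dimS_def)
  show "\<forall>i\<in>{1..l}. \<forall>p<4. \<forall>q<4.
      of_blocks (dual_blocks l S) (4 * i + p) (4 * i + q) + 2 * of_blocks (dual_blocks l S) p (4 * i + q) = 0"
    by (simp add: of_blocks_def dual_blocks_def)
  have "dual_blocks l S i j = 0" if "\<not> (i = j \<and> 1 \<le> i \<or> i = 0 \<and> 1 \<le> j \<or> j = 0 \<and> 1 \<le> i)" for i j
    using that by (auto simp: dual_blocks_def)
  then show "\<forall>a<dimS l. \<forall>b<dimS l. \<not> (a div 4 = b div 4 \<and> 1 \<le> a div 4 \<or> a div 4 = 0 \<and> 1 \<le> b div 4
      \<or> b div 4 = 0 \<and> 1 \<le> a div 4) \<longrightarrow> of_blocks (dual_blocks l S) a b = 0"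
    by (simp add: of_blocks_def)
qed

lemma D_feasible_of_dominates_neg:
  assumes \<Gamma>: "\<And>i. i \<in> {1..l} \<Longrightarrow> dominates_neg (cost_shift y x c i) (\<Gamma> i)"
    and top: "psd_matrix ((- \<mu>) *\<^sub>R mat 1 - (\<Sum>i\<in>{1..l}. \<Gamma> i))"
  shows "\<exists>D. D_feasible l y x c \<mu> D"
proof -
  define S where "S i = cost_shift y x c i + 2 *\<^sub>R \<Gamma> i" for i
  have S_sym: "transpose (S i) = S i" if "i \<in> {1..l}" for i
    using \<Gamma>[OF that] by (simp add: S_def dominates_neg_def psd_matrix_def transpose_add
        transpose_scalar cost_shift_symmetric)
  define Mblocks where "Mblocks i j = Qblocks l y x c i j - \<mu> *\<^sub>R Bblocks i j - dual_blocks l S i j" for i j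
  have "psd (dimS l) (of_blocks Mblocks)"
    unfolding psd_def
  proof (intro conjI allI impI)
    fix a b
    assume "a < dimS l" "b < dimS l"
    have Mblocks_T: "Mblocks j i = transpose (Mblocks i j)" for i j
      using dual_blocks_transpose[of l S i j, OF S_sym] cost_shift_symmetric
      by (auto simp: Mblocks_def Qblocks_def Bblocks_def transpose_diff transpose_scalar)
    show "of_blocks Mblocks a b = of_blocks Mblocks b a"
      using of_blocks_symmetric[of l Mblocks, OF Mblocks_T] \<open>a < dimS l\<close> \<open>b < dimS l\<close>
      by (simp add: dimS_def)
  next
    fix v :: "nat \<Rightarrow> real"
    define z where "z = vblock v"
    have split: "z i \<bullet> ((P + 2 *\<^sub>R G) *v z i) + z 0 \<bullet> ((- G) *v z i) + z i \<bullet> ((- G) *v z 0) =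
        (z 0 - z i) \<bullet> (G *v (z 0 - z i)) + z i \<bullet> ((P + G) *v z i) - z 0 \<bullet> (G *v z 0)"
      for P G :: "real^4^4" and i
      by (simp add: algebra_simps inner_diff_left inner_diff_right inner_add_right
          matrix_vector_mult_uminus flip: scaleR_matrix_vector_assoc)
    have "(\<Sum>a<dimS l. \<Sum>b<dimS l. v a * of_blocks Mblocks a b * v b)
        = (\<Sum>i<Suc l. \<Sum>j<Suc l. z i \<bullet> (Mblocks i j *v z j))"
      by (simp only: dimS_def Suc_eq_plus1[symmetric] quadratic_form_blocks block_of_blocks z_def)
    also have "\<dots> = z 0 \<bullet> (((- \<mu>) *\<^sub>R mat 1) *v z 0) + (\<Sum>i\<in>{1..l}.
        z i \<bullet> ((cost_shift y x c i + 2 *\<^sub>R \<Gamma> i) *v z i) + z 0 \<bullet> ((- \<Gamma> i) *v z i)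
        + z i \<bullet> ((- \<Gamma> i) *v z 0))"
      by (subst sum_arrow)
        (auto simp: Mblocks_def Qblocks_def Bblocks_def dual_blocks_def S_def algebra_simps
          intro!: sum.cong simp flip: scaleR_add_left)
    also have "\<dots> = z 0 \<bullet> (((- \<mu>) *\<^sub>R mat 1 - (\<Sum>i\<in>{1..l}. \<Gamma> i)) *v z 0) + (\<Sum>i\<in>{1..l}.
        (z 0 - z i) \<bullet> (\<Gamma> i *v (z 0 - z i)) + z i \<bullet> ((cost_shift y x c i + \<Gamma> i) *v z i))"
      unfolding split by (simp add: sum_subtractf matrix_vector_mult_diff_rdistrib inner_diff_right
          inner_sum_right matrix_vector_mult_sum_left sum.distrib)
    also have "0 \<le> \<dots>"
      using top \<Gamma> by (intro add_nonneg_nonneg sum_nonneg psd_matrix_form) (auto simp: dominates_neg_def)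
    finally show "0 \<le> (\<Sum>a<dimS l. \<Sum>b<dimS l. v a * of_blocks Mblocks a b * v b)" .
  qed
  moreover have "(\<lambda>a b. bigQ l y x c a b - \<mu> * bigB a b - of_blocks (dual_blocks l S) a b) = of_blocks Mblocks"
    by (simp add: bigQ_of_blocks bigB_of_blocks Mblocks_def of_blocks_def fun_eq_iff)
  ultimately show ?thesis
    unfolding D_feasible_def using admissible_dual_of_blocks[of l S, OF S_sym]
    by (intro exI[of _ "of_blocks (dual_blocks l S)"]) simp
qed

text \<open>With \<open>V = W\<^sub>0\<^sup>-\<^sup>1\<close> and the block row \<open>G = [I, V X\<^sub>1, \<dots>, V X\<^sub>l]\<close>, these blocks form
  \<open>G\<^sup>T W\<^sub>0 G + diag(0, X\<^sub>1 - X\<^sub>1 V X\<^sub>1, \<dots>, X\<^sub>l - X\<^sub>l V X\<^sub>l)\<close>, which is positive semidefinite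
  as soon as \<open>0 \<preceq> X\<^sub>i \<preceq> W\<^sub>0\<close>.\<close>

definition completion_blocks :: "real^4^4 \<Rightarrow> real^4^4 \<Rightarrow> (nat \<Rightarrow> real^4^4) \<Rightarrow> nat \<Rightarrow> nat \<Rightarrow> real^4^4" where
  "completion_blocks W\<^sub>0 V X i j = (if i = 0 \<and> j = 0 then W\<^sub>0 else if i = 0 then X j
     else if j = 0 then X i else if i = j then X i else X i ** V ** X j)"

lemma quadratic_form_completion_blocks:
  fixes z :: "nat \<Rightarrow> real^4"
  assumes V: "W\<^sub>0 ** V = mat 1" "transpose V = V" and W\<^sub>0: "transpose W\<^sub>0 = W\<^sub>0"
    and X: "\<And>i. i \<in> {1..l} \<Longrightarrow> transpose (X i) = X i"
  defines "u \<equiv> (\<Sum>i\<in>{1..l}. V *v (X i *v z i))"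
  shows "(\<Sum>i<Suc l. \<Sum>j<Suc l. z i \<bullet> (completion_blocks W\<^sub>0 V X i j *v z j)) =
    (z 0 + u) \<bullet> (W\<^sub>0 *v (z 0 + u)) + (\<Sum>i\<in>{1..l}. z i \<bullet> ((X i - X i ** V ** X i) *v z i))"
proof -
  define A where "A = {1..l}"
  define F where "F i j = z i \<bullet> (completion_blocks W\<^sub>0 V X i j *v z j)" for i j
  have W\<^sub>0_u: "W\<^sub>0 *v u = (\<Sum>i\<in>A. X i *v z i)"
    by (simp add: u_def A_def linear_sum[OF matrix_vector_mul_linear] matrix_vector_mul_assoc
        matrix_mul_assoc V(1))
  have cross: "(V *v (X i *v z i)) \<bullet> (X j *v z j) = z i \<bullet> ((X i ** V ** X j) *v z j)" if "i \<in> A" for i j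
    using that X V(2) unfolding A_def
    by (simp add: inner_mv_transpose matrix_vector_mul_assoc matrix_mul_assoc matrix_transpose_mul)
  have "{..<Suc l} = insert 0 A"
    by (auto simp: A_def)
  then have "(\<Sum>i<Suc l. \<Sum>j<Suc l. F i j) = F 0 0 + (\<Sum>j\<in>A. F 0 j) + (\<Sum>i\<in>A. F i 0 + (\<Sum>j\<in>A. F i j))"
    by (simp add: A_def sum.distrib add_ac)
  also have "\<dots> = (z 0 + u) \<bullet> (W\<^sub>0 *v (z 0 + u)) + (\<Sum>i\<in>A. z i \<bullet> ((X i - X i ** V ** X i) *v z i))"
  proof -
    have "F i 0 = z 0 \<bullet> (X i *v z i)" "F 0 i = z 0 \<bullet> (X i *v z i)" if "i \<in> A" for i
      using that inner_mv_symmetric[OF X] unfolding F_def completion_blocks_def A_def by auto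
    moreover have "(\<Sum>j\<in>A. F i j) = (\<Sum>j\<in>A. z i \<bullet> ((X i ** V ** X j) *v z j))
        + z i \<bullet> ((X i - X i ** V ** X i) *v z i)" if "i \<in> A" for i
    proof -
      have "(\<Sum>j\<in>A. F i j) = (\<Sum>j\<in>A. z i \<bullet> ((X i ** V ** X j) *v z j)
          + (if j = i then z i \<bullet> ((X i - X i ** V ** X i) *v z i) else 0))"
        using that unfolding F_def completion_blocks_def A_def
        by (intro sum.cong) (auto simp: matrix_vector_mult_diff_rdistrib inner_diff_right)
      then show ?thesis
        using that by (simp add: sum.distrib A_def)
    qed
    moreover have "u \<bullet> (W\<^sub>0 *v u) = (\<Sum>i\<in>A. \<Sum>j\<in>A. z i \<bullet> ((X i ** V ** X j) *v z j))"
    proof -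
      have "u \<bullet> (W\<^sub>0 *v u) = (\<Sum>i\<in>A. (V *v (X i *v z i)) \<bullet> (\<Sum>j\<in>A. X j *v z j))"
        unfolding W\<^sub>0_u by (simp add: u_def A_def inner_sum_left)
      then show ?thesis
        by (simp add: inner_sum_right cross)
    qed
    moreover have "u \<bullet> (W\<^sub>0 *v z 0) = z 0 \<bullet> (W\<^sub>0 *v u)"
      by (rule inner_mv_symmetric[OF W\<^sub>0])
    ultimately show ?thesis
      by (simp add: F_def completion_blocks_def W\<^sub>0_u matrix_vector_right_distrib inner_add_left
          inner_add_right inner_sum_right sum.distrib add_ac)
  qed
  finally show ?thesis
    by (simp add: F_def A_def)
qed

lemma psd_completion_blocks:
  assumes W\<^sub>0: "psd_matrix W\<^sub>0" and V: "W\<^sub>0 ** V = mat 1" "transpose V = V"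
    and X: "\<And>i. i \<in> {1..l} \<Longrightarrow> psd_matrix (X i)" "\<And>i. i \<in> {1..l} \<Longrightarrow> psd_matrix (W\<^sub>0 - X i)"
  shows "psd (dimS l) (of_blocks (completion_blocks W\<^sub>0 V X))"
  unfolding psd_def
proof (intro conjI allI impI)
  have X_sym: "transpose (X i) = X i" if "i \<in> {1..l}" for i
    using psd_matrix_symmetric[OF X(1)[OF that]] .
  have blocks_T: "completion_blocks W\<^sub>0 V X j i = transpose (completion_blocks W\<^sub>0 V X i j)"
    if "i \<le> l" "j \<le> l" for i j
    using that psd_matrix_symmetric[OF W\<^sub>0] X_sym V(2)
    by (auto simp: completion_blocks_def matrix_transpose_mul matrix_mul_assoc)
  show "of_blocks (completion_blocks W\<^sub>0 V X) a b = of_blocks (completion_blocks W\<^sub>0 V X) b a"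
    if "a < dimS l" "b < dimS l" for a b
    using of_blocks_symmetric[of l "completion_blocks W\<^sub>0 V X", OF blocks_T] that by (simp add: dimS_def)
  fix v :: "nat \<Rightarrow> real"
  have "(\<Sum>a<dimS l. \<Sum>b<dimS l. v a * of_blocks (completion_blocks W\<^sub>0 V X) a b * v b) =
      (\<Sum>i<Suc l. \<Sum>j<Suc l. vblock v i \<bullet> (completion_blocks W\<^sub>0 V X i j *v vblock v j))"
    by (simp only: dimS_def Suc_eq_plus1[symmetric] quadratic_form_blocks block_of_blocks)
  also have "\<dots> = (vblock v 0 + (\<Sum>i\<in>{1..l}. V *v (X i *v vblock v i))) \<bullet>
      (W\<^sub>0 *v (vblock v 0 + (\<Sum>i\<in>{1..l}. V *v (X i *v vblock v i))))
      + (\<Sum>i\<in>{1..l}. vblock v i \<bullet> ((X i - X i ** V ** X i) *v vblock v i))"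
    by (rule quadratic_form_completion_blocks[OF V psd_matrix_symmetric[OF W\<^sub>0] X_sym])
  also have "0 \<le> \<dots>"
    using W\<^sub>0 X V by (intro add_nonneg_nonneg sum_nonneg psd_matrix_form psd_matrix_diff_mult_inverse) auto
  finally show "0 \<le> (\<Sum>a<dimS l. \<Sum>b<dimS l. v a * of_blocks (completion_blocks W\<^sub>0 V X) a b * v b)" .
qed

lemma SDR_feasible_of_matrix_interval:
  fixes W\<^sub>0 :: "real^4^4" and X :: "nat \<Rightarrow> real^4^4"
  assumes W\<^sub>0: "psd_matrix (W\<^sub>0 - \<delta> *\<^sub>R mat 1)" "0 < \<delta>" "trace W\<^sub>0 = 1"
    and X: "\<And>i. i \<in> {1..l} \<Longrightarrow> psd_matrix (X i)" "\<And>i. i \<in> {1..l} \<Longrightarrow> psd_matrix (W\<^sub>0 - X i)"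
  shows "\<exists>W. SDR_feasible l W \<and>
    SDR_obj l y x c W = (\<Sum>i\<in>{1..l}. cost_shift y x c i \<bullet> X i) + (\<Sum>i=1..l. (c i)\<^sup>2)"
proof -
  obtain V where V: "W\<^sub>0 ** V = mat 1" "transpose V = V"
    using positive_definite_symmetric_inverse[OF W\<^sub>0(1,2)] by blast
  define W where "W = of_blocks (completion_blocks W\<^sub>0 V X)"
  have "psd (dimS l) W"
    unfolding W_def using psd_matrix_if_psd_diff_mat1[OF W\<^sub>0(1)] W\<^sub>0(2) V X
    by (intro psd_completion_blocks) auto
  moreover have "\<forall>i\<in>{1..l}. \<forall>p<4. \<forall>q<4. W p (4*i+q) = W (4*i+p) (4*i+q)"
    by (simp add: W_def of_blocks_def completion_blocks_def)
  moreover have "(\<Sum>p<4. W p p) = 1"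
    using trace_block_00[of W] W\<^sub>0(3) by (simp add: W_def completion_blocks_def)
  ultimately have "SDR_feasible l W"
    by (simp add: SDR_feasible_def)
  moreover have "block W i i = X i" if "i \<in> {1..l}" for i
    using that by (simp add: W_def completion_blocks_def)
  then have "SDR_obj l y x c W = (\<Sum>i\<in>{1..l}. cost_shift y x c i \<bullet> X i) + (\<Sum>i=1..l. (c i)\<^sup>2)"
    using SDR_obj_eq[OF \<open>SDR_feasible l W\<close>] by simp
  ultimately show ?thesis
    by blast
qed

lemma SDR_feasible_near_dual_bound:
  assumes W: "psd_matrix (W - \<delta> *\<^sub>R mat 1)" "0 < \<delta>" "trace W = 1" and "0 < \<eta>"
  obtains W' \<Gamma> where "SDR_feasible l W'" "\<forall>i\<in>{1..l}. dominates_neg (cost_shift y x c i) (\<Gamma> i)"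
    "SDR_obj l y x c W' \<le> real l * \<eta> - W \<bullet> (\<Sum>i\<in>{1..l}. \<Gamma> i) + (\<Sum>i=1..l. (c i)\<^sup>2)"
proof -
  define P where "P = cost_shift y x c"
  have "\<forall>i. \<exists>\<Gamma>X. dominates_neg (P i) (fst \<Gamma>X) \<and> psd_matrix (snd \<Gamma>X) \<and> psd_matrix (W - snd \<Gamma>X)
      \<and> P i \<bullet> snd \<Gamma>X \<le> \<eta> - W \<bullet> fst \<Gamma>X"
    using matrix_interval_duality[OF W(1,2) cost_shift_symmetric \<open>0 < \<eta>\<close>] by (simp add: P_def)
  then obtain f where f: "\<forall>i. dominates_neg (P i) (fst (f i)) \<and> psd_matrix (snd (f i))
      \<and> psd_matrix (W - snd (f i)) \<and> P i \<bullet> snd (f i) \<le> \<eta> - W \<bullet> fst (f i)"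
    by (rule choice[THEN exE])
  define \<Gamma> where "\<Gamma> i = fst (f i)" for i
  define X where "X i = snd (f i)" for i
  obtain W' where "SDR_feasible l W'" and obj: "SDR_obj l y x c W' = (\<Sum>i\<in>{1..l}. P i \<bullet> X i) + (\<Sum>i=1..l. (c i)\<^sup>2)"
    using SDR_feasible_of_matrix_interval[OF W, of l X y x c] f unfolding P_def X_def by blast
  moreover have "(\<Sum>i\<in>{1..l}. P i \<bullet> X i) \<le> real l * \<eta> - W \<bullet> (\<Sum>i\<in>{1..l}. \<Gamma> i)"
  proof -
    have "(\<Sum>i\<in>{1..l}. P i \<bullet> X i) \<le> (\<Sum>i\<in>{1..l}. \<eta> - W \<bullet> \<Gamma> i)"
      using f by (intro sum_mono) (simp add: X_def \<Gamma>_def)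
    then show ?thesis
      by (simp add: sum_subtractf inner_sum_right)
  qed
  moreover have "\<forall>i\<in>{1..l}. dominates_neg (P i) (\<Gamma> i)"
    using f by (simp add: \<Gamma>_def)
  ultimately show ?thesis
    using that unfolding P_def by fastforce
qed

lemma density_matrix_perturbation:
  fixes W\<^sub>0 :: "real^'n^'n"
  assumes "psd_matrix W\<^sub>0" "trace W\<^sub>0 = 1" "\<theta> \<le> 1"
  defines "W \<equiv> (1 - \<theta>) *\<^sub>R W\<^sub>0 + (\<theta> / CARD('n)) *\<^sub>R mat 1"
  shows "psd_matrix (W - (\<theta> / CARD('n)) *\<^sub>R mat 1)" "trace W = 1"
    and "0 \<le> \<theta> \<Longrightarrow> psd_matrix G \<Longrightarrow> (1 - \<theta>) * (W\<^sub>0 \<bullet> G) \<le> W \<bullet> G"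
proof -
  show "psd_matrix (W - (\<theta> / CARD('n)) *\<^sub>R mat 1)"
    using psd_matrix_scaleR[OF assms(1), of "1 - \<theta>"] assms(3) by (simp add: W_def)
  show "trace W = 1"
    using assms(2) by (simp add: W_def trace_add trace_scaleR trace_I)
  assume "0 \<le> \<theta>" "psd_matrix G"
  then show "(1 - \<theta>) * (W\<^sub>0 \<bullet> G) \<le> W \<bullet> G"
    using trace_psd_nonneg[of G]
    by (simp add: W_def inner_add_left inner_commute[of "mat 1"] inner_mat1)
qed

lemma dual_feasible_near_primal_bound:
  assumes lower: "\<And>W. SDR_feasible l W \<Longrightarrow> r \<le> SDR_obj l y x c W" and "0 < \<epsilon>"
  shows "\<exists>\<mu> D. D_feasible l y x c \<mu> D \<and> r - \<epsilon> \<le> \<mu> + (\<Sum>i=1..l. (c i)\<^sup>2)"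
proof -
  define C where "C = (\<Sum>i=1..l. (c i)\<^sup>2)"
  define t where "t = \<epsilon> - (r - C)"
  consider (primal) W\<^sub>0 where "psd_matrix W\<^sub>0" "trace W\<^sub>0 = 1"
      "\<And>\<Gamma>. \<forall>i\<in>{1..l}. dominates_neg (cost_shift y x c i) (\<Gamma> i) \<Longrightarrow> t \<le> W\<^sub>0 \<bullet> (\<Sum>i\<in>{1..l}. \<Gamma> i)"
    | (dual) \<Gamma> where "\<forall>i\<in>{1..l}. dominates_neg (cost_shift y x c i) (\<Gamma> i)"
      "psd_matrix (t *\<^sub>R mat 1 - (\<Sum>i\<in>{1..l}. \<Gamma> i))"
    using dominates_neg_sum_alternative[of "{1..l}" "cost_shift y x c" t] cost_shift_symmetric by blast
  then show ?thesis
  proof cases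
    case primal
    \<comment> \<open>\<open>W\<^sub>0\<close> may be singular, but the completion to a feasible point needs an invertible matrix\<close>
    define \<theta> where "\<theta> = \<epsilon> / (2 * (\<bar>t\<bar> + \<epsilon>))"
    have "0 < \<theta>" "\<theta> < 1" "\<theta> * t < \<epsilon> / 2"
      using \<open>0 < \<epsilon>\<close> by (auto simp: \<theta>_def field_simps abs_if)
    define W where "W = (1 - \<theta>) *\<^sub>R W\<^sub>0 + (\<theta> / CARD(4)) *\<^sub>R mat 1"
    have W_pd: "psd_matrix (W - (\<theta> / CARD(4)) *\<^sub>R mat 1)" and "trace W = 1"
      using density_matrix_perturbation[OF primal(1,2)] \<open>\<theta> < 1\<close> by (simp_all add: W_def)
    define \<eta> where "\<eta> = \<epsilon> / (2 * (real l + 1))"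
    have "0 < \<eta>" "real l * \<eta> < \<epsilon> / 2"
      using \<open>0 < \<epsilon>\<close> by (simp_all add: \<eta>_def field_simps)
    obtain W' \<Gamma> where "SDR_feasible l W'" and \<Gamma>: "\<forall>i\<in>{1..l}. dominates_neg (cost_shift y x c i) (\<Gamma> i)"
      and obj: "SDR_obj l y x c W' \<le> real l * \<eta> - W \<bullet> (\<Sum>i\<in>{1..l}. \<Gamma> i) + C"
      using SDR_feasible_near_dual_bound[OF W_pd _ \<open>trace W = 1\<close> \<open>0 < \<eta>\<close>, where l = l and y = y
          and x = x and c = c] \<open>0 < \<theta>\<close>
      unfolding C_def by (metis divide_pos_pos of_nat_0_less_iff zero_less_card_finite)
    have "(1 - \<theta>) * t \<le> (1 - \<theta>) * (W\<^sub>0 \<bullet> (\<Sum>i\<in>{1..l}. \<Gamma> i))"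
      using primal(3)[OF \<Gamma>] \<open>\<theta> < 1\<close> by simp
    also have "\<dots> \<le> W \<bullet> (\<Sum>i\<in>{1..l}. \<Gamma> i)"
    proof -
      have "psd_matrix (\<Sum>i\<in>{1..l}. \<Gamma> i)"
        using \<Gamma> by (intro psd_matrix_sum) (simp add: dominates_neg_def)
      then show ?thesis
        using density_matrix_perturbation(3)[OF primal(1,2)] \<open>0 < \<theta>\<close> \<open>\<theta> < 1\<close> by (simp add: W_def)
    qed
    finally have "(1 - \<theta>) * t \<le> W \<bullet> (\<Sum>i\<in>{1..l}. \<Gamma> i)" .
    then have "SDR_obj l y x c W' < r"
      using obj \<open>real l * \<eta> < \<epsilon> / 2\<close> \<open>\<theta> * t < \<epsilon> / 2\<close> by (simp add: t_def algebra_simps)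
    with lower[OF \<open>SDR_feasible l W'\<close>] show ?thesis
      by simp
  next
    case dual
    then obtain D where "D_feasible l y x c (- t) D"
      using D_feasible_of_dominates_neg[of l y x c \<Gamma> "- t"] by auto
    then show ?thesis
      by (intro exI[of _ "- t"] exI[of _ D]) (simp add: t_def C_def)
  qed
qed

lemma D_val_le_SDR_val: "D_val l y x c \<le> SDR_val l y x c"
  unfolding D_val_def SDR_val_def
proof (intro Sup_least Inf_greatest)
  fix d s
  assume "d \<in> {ereal (\<mu> + (\<Sum>i=1..l. (c i)\<^sup>2)) | \<mu> D. D_feasible l y x c \<mu> D}"
    and "s \<in> {ereal (SDR_obj l y x c W) | W. SDR_feasible l W}"
  then obtain \<mu> D W where "d = ereal (\<mu> + (\<Sum>i=1..l. (c i)\<^sup>2))" "D_feasible l y x c \<mu> D"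
    and "s = ereal (SDR_obj l y x c W)" "SDR_feasible l W"
    by blast
  then show "d \<le> s"
    using weak_duality[of l W y x c \<mu> D] by simp
qed

lemma SDR_val_le_D_val: "SDR_val l y x c \<le> D_val l y x c"
proof (rule dense_le)
  fix u
  assume "u < SDR_val l y x c"
  show "u \<le> D_val l y x c"
  proof (cases u)
    case (real r)
    have lower: "r \<le> SDR_obj l y x c W" if "SDR_feasible l W" for W
    proof -
      have "SDR_val l y x c \<le> ereal (SDR_obj l y x c W)"
        unfolding SDR_val_def using that by (blast intro: Inf_lower)
      then have "u < ereal (SDR_obj l y x c W)"
        by (rule less_le_trans[OF \<open>u < SDR_val l y x c\<close>])
      then show ?thesis
        using real by simp
    qed
    show ?thesis
      unfolding real
    proof (rule ereal_le_epsilon2)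
      fix \<epsilon> :: real
      assume "0 < \<epsilon>"
      then obtain \<mu> D where "D_feasible l y x c \<mu> D" and approx: "r - \<epsilon> \<le> \<mu> + (\<Sum>i=1..l. (c i)\<^sup>2)"
        using dual_feasible_near_primal_bound[OF lower] by blast
      have "ereal r \<le> ereal (\<mu> + (\<Sum>i=1..l. (c i)\<^sup>2)) + ereal \<epsilon>"
        using approx by simp
      also have "\<dots> \<le> D_val l y x c + ereal \<epsilon>"
        unfolding D_val_def using \<open>D_feasible l y x c \<mu> D\<close>
        by (intro add_right_mono Sup_upper) blast
      finally show "ereal r \<le> D_val l y x c + ereal \<epsilon>" .
    qed
  qed (use \<open>u < SDR_val l y x c\<close> in auto)
qed

theorem proposition2p4:
  fixes l :: nat and y x :: "nat \<Rightarrow> real^3" and c :: "nat \<Rightarrow> real"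
  shows "SDR_val l y x c = D_val l y x c"
  using SDR_val_le_D_val D_val_le_SDR_val by (rule antisym)

end
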